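(* Let $k$ be a field of characteristic zero, $a\in k[h]$ a non-constant polynomial, $h_0\in k\setminus\{0\}$, $\sigma\in\mathrm{Aut}_k(k[h])$ given by $\sigma(h)=h-h_0$, and $A=A(k[h],a,\sigma)$ the generalized Weyl algebra. Let $r\geq 1$ and let $w\in k$ be a primitive $r$-th root of unity, and let $G=\mathbb{Z}/r\mathbb{Z}$ act on $A$ by powers of the automorphism $\theta_w$ of $A$ determined by $\theta_w(x)=wx$, $\theta_w(y)=w^{-1}y$, $\theta_w(h)=h$. Then the subalgebra of invariants $A^G$ is isomorphic to the generalized Weyl algebra $A(k[H],\tilde a,\tau)$, where $\tau\in\mathrm{Aut}_k(k[H])$ is given by $\tau(H)=H-h_0$ and \[\tilde a(H)=\sigma^{-r+1}(a)(rH)\cdots\sigma^{-1}(a)(rH)\,a(rH),\] i.e. $\tilde a(H)=\prod_{i=0}^{r-1}(\sigma^{-i}(a))(rH)$, where $(\sigma^{-i}(a))(rH)$ denotes the polynomial $\sigma^{-i}(a)\in k[h]$ evaluated at $h=rH$. (Under the isomorphism, $H$ corresponds to $h/r$, and the generators $X,Y$ of the generalized Weyl algebra correspond to $x^r,y^r$.)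
   Context: For a $k$-algebra $R$, a central element $a\in R$ and $\sigma\in\mathrm{Aut}_k(R)$, the generalized Weyl algebra $A(R,a,\sigma)$ is the $k$-algebra generated by $R$ and two new variables $x,y$ subject to the relations $yx=a$, $xy=\sigma(a)$, $xr=\sigma(r)x$ and $ry=y\sigma(r)$ for all $r\in R$. *)

theory Defs
  imports "HOL-Computational_Algebra.Polynomial" "HOL-Algebra.QuotRing"
begin

text \<open>Generalized Weyl algebra A(k[h], a, sigma) with sigma(h) = h - h0, constructed as
  the free associative k-algebra on the letters h, x, y modulo the two-sided ideal
  generated by the defining relations (k[h] is free commutative on h, so the algebra
  generated by k[h] and x, y is a quotient of the free algebra k<h,x,y>).\<close>

datatype gwa_letter = Lh | Lx | Ly

text \<open>Free associative k-algebra k<h,x,y>: finitely supported functions on words,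
  multiplication = k-bilinear extension of concatenation of words.\<close>
definition free_alg :: "(gwa_letter list \<Rightarrow> 'k::field) ring" where
  "free_alg =
    \<lparr> carrier = {f. finite {u. f u \<noteq> 0}},
      mult = (\<lambda>f g u. \<Sum>i\<le>length u. f (take i u) * g (drop i u)),
      one = (\<lambda>u. if u = [] then 1 else 0),
      zero = (\<lambda>u. 0),
      add = (\<lambda>f g u. f u + g u) \<rparr>"

definition fa_word :: "gwa_letter list \<Rightarrow> gwa_letter list \<Rightarrow> 'k::field" where
  "fa_word v = (\<lambda>u. if u = v then 1 else 0)"

definition fa_poly :: "'k::field poly \<Rightarrow> gwa_letter list \<Rightarrow> 'k" where
  "fa_poly p = (\<lambda>u. if u = replicate (length u) Lh then coeff p (length u) else 0)"

definition gwa_sigma :: "'k::field \<Rightarrow> 'k poly \<Rightarrow> 'k poly" where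
  "gwa_sigma h0 p = pcompose p [:- h0, 1:]"

definition gwa_rels :: "'k::field poly \<Rightarrow> 'k \<Rightarrow> (gwa_letter list \<Rightarrow> 'k) set" where
  "gwa_rels a h0 =
     { fa_word [Ly] \<otimes>\<^bsub>free_alg\<^esub> fa_word [Lx] \<ominus>\<^bsub>free_alg\<^esub> fa_poly a,
       fa_word [Lx] \<otimes>\<^bsub>free_alg\<^esub> fa_word [Ly] \<ominus>\<^bsub>free_alg\<^esub> fa_poly (gwa_sigma h0 a) }
   \<union> (\<Union>r. { fa_word [Lx] \<otimes>\<^bsub>free_alg\<^esub> fa_poly r
               \<ominus>\<^bsub>free_alg\<^esub> fa_poly (gwa_sigma h0 r) \<otimes>\<^bsub>free_alg\<^esub> fa_word [Lx],
             fa_poly r \<otimes>\<^bsub>free_alg\<^esub> fa_word [Ly]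
               \<ominus>\<^bsub>free_alg\<^esub> fa_word [Ly] \<otimes>\<^bsub>free_alg\<^esub> fa_poly (gwa_sigma h0 r) })"

definition gwa_ideal :: "'k::field poly \<Rightarrow> 'k \<Rightarrow> (gwa_letter list \<Rightarrow> 'k) set" where
  "gwa_ideal a h0 = genideal free_alg (gwa_rels a h0)"

definition gwa :: "'k::field poly \<Rightarrow> 'k \<Rightarrow> (gwa_letter list \<Rightarrow> 'k) set ring" where
  "gwa a h0 = free_alg Quot gwa_ideal a h0"

definition gwa_class :: "'k::field poly \<Rightarrow> 'k \<Rightarrow> (gwa_letter list \<Rightarrow> 'k) \<Rightarrow> (gwa_letter list \<Rightarrow> 'k) set" where
  "gwa_class a h0 f = gwa_ideal a h0 +>\<^bsub>free_alg\<^esub> f"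

definition gwa_scalar :: "'k::field poly \<Rightarrow> 'k \<Rightarrow> 'k \<Rightarrow> (gwa_letter list \<Rightarrow> 'k) set" where
  "gwa_scalar a h0 c = gwa_class a h0 (fa_poly [:c:])"

text \<open>Lift to k<h,x,y> of theta_w: the algebra endomorphism with h \<mapsto> h, x \<mapsto> w x,
  y \<mapsto> w^-1 y; on a word u it multiplies by w^(#x in u) * (w^-1)^(#y in u).\<close>
definition theta_free :: "'k::field \<Rightarrow> (gwa_letter list \<Rightarrow> 'k) \<Rightarrow> (gwa_letter list \<Rightarrow> 'k)" where
  "theta_free w f = (\<lambda>u. w ^ count_list u Lx * inverse w ^ count_list u Ly * f u)"

definition gwa_theta :: "'k::field poly \<Rightarrow> 'k \<Rightarrow> 'k \<Rightarrow> (gwa_letter list \<Rightarrow> 'k) set \<Rightarrow> (gwa_letter list \<Rightarrow> 'k) set" where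
  "gwa_theta a h0 w C = gwa_class a h0 (theta_free w (SOME f. f \<in> C))"

definition gwa_invariants :: "'k::field poly \<Rightarrow> 'k \<Rightarrow> 'k \<Rightarrow> nat \<Rightarrow> (gwa_letter list \<Rightarrow> 'k) set set" where
  "gwa_invariants a h0 w r =
     {C \<in> carrier (gwa a h0). \<forall>j<r. (gwa_theta a h0 w ^^ j) C = C}"

definition gwa_inv_alg :: "'k::field poly \<Rightarrow> 'k \<Rightarrow> 'k \<Rightarrow> nat \<Rightarrow> (gwa_letter list \<Rightarrow> 'k) set ring" where
  "gwa_inv_alg a h0 w r = (gwa a h0) \<lparr> carrier := gwa_invariants a h0 w r \<rparr>"

definition kalg_iso ::
  "('a, 'c) ring_scheme \<Rightarrow> ('k \<Rightarrow> 'a) \<Rightarrow> ('b, 'd) ring_scheme \<Rightarrow> ('k \<Rightarrow> 'b) \<Rightarrow> ('a \<Rightarrow> 'b) set" where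
  "kalg_iso A \<iota>A B \<iota>B = {\<phi>. \<phi> \<in> ring_iso A B \<and> (\<forall>c. \<phi> (\<iota>A c) = \<iota>B c)}"

definition prim_root :: "nat \<Rightarrow> 'k::field \<Rightarrow> bool" where
  "prim_root r w \<longleftrightarrow> w ^ r = 1 \<and> (\<forall>j. 0 < j \<and> j < r \<longrightarrow> w ^ j \<noteq> 1)"

end

(*
  Both generalized Weyl algebras act faithfully on the space of sequences Z -> k[t]:
  A = A(k[h], a, sigma) by h |-> t, (x v)_n = v_(n-1)(t - h0), (y v)_n = a(t) v_(n+1)(t + h0),
  and A(k[H], atilde, tau) by H |-> t/r, X |-> x^r, Y |-> y^r; the relation Y X = atilde(H)
  holds because y^r x^r acts as a(t) a(t + h0) ... a(t + (r-1) h0).  Faithfulness comes from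
  normal forms: modulo the relations every element is a combination of the words h^i x^n
  (h^i y^-n for n < 0), and these words send the sequence concentrated at 0 to the linearly
  independent vectors t^i in position n (up to nonzero factors).
  The automorphism theta_w multiplies h^i x^n by w^n, so the invariants are the combinations
  with r dividing every n, and they act exactly as the normal forms H^i X^(n/r) of the second
  algebra, up to the factors r^i.  Two quotients of the same free algebra whose images in the
  endomorphisms of one space coincide are isomorphic.
*)

theory Submission
  imports Defs
begin

section \<open>The free algebra on \<open>h\<close>, \<open>x\<close>, \<open>y\<close>\<close>

abbreviation fa_mult ::
  "(gwa_letter list \<Rightarrow> 'k::field) \<Rightarrow> (gwa_letter list \<Rightarrow> 'k) \<Rightarrow> gwa_letter list \<Rightarrow> 'k"
  (infixl "\<star>" 70)
  where "f \<star> g \<equiv> f \<otimes>\<^bsub>free_alg\<^esub> g"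

definition splits :: "'a list \<Rightarrow> ('a list \<times> 'a list) set" where
  "splits u = {(p, q). p @ q = u}"

definition splits3 :: "'a list \<Rightarrow> ('a list \<times> 'a list \<times> 'a list) set" where
  "splits3 u = {(p, q, r). p @ q @ r = u}"

lemma splits_eq_image: "splits u = (\<lambda>i. (take i u, drop i u)) ` {..length u}"
proof -
  have "(p, q) \<in> (\<lambda>i. (take i u, drop i u)) ` {..length u}" if "p @ q = u" for p q
    using that by (intro image_eqI[of _ _ "length p"]) auto
  then show ?thesis
    unfolding splits_def by auto
qed

lemma finite_splits [simp]: "finite (splits u)"
  by (simp add: splits_eq_image)

lemma sum_take_drop_eq_sum_splits:
  "(\<Sum>i\<le>length u. F (take i u) (drop i u)) = (\<Sum>(p, q)\<in>splits u. F p q)"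
proof -
  have "inj_on (\<lambda>i. (take i u, drop i u)) {..length u}"
    by (auto simp: inj_on_def) (metis length_take min.absorb2)
  then show ?thesis
    unfolding splits_eq_image by (simp add: sum.reindex)
qed

lemma sum_splits_Nil_left:
  "(\<Sum>(p, q)\<in>splits u. (if p = [] then 1 else 0) * (g q :: 'k::field)) = g u"
proof -
  have "(\<Sum>(p, q)\<in>splits u. (if p = [] then 1 else 0) * g q) =
        (\<Sum>x\<in>splits u. if x = ([], u) then g u else 0)"
    by (rule sum.cong) (auto simp: splits_def split: if_splits)
  also have "\<dots> = g u"
    by (simp add: sum.delta[OF finite_splits]) (simp add: splits_def)
  finally show ?thesis .
qed

lemma sum_splits_Nil_right:
  "(\<Sum>(p, q)\<in>splits u. (f p :: 'k::field) * (if q = [] then 1 else 0)) = f u"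
proof -
  have "(\<Sum>(p, q)\<in>splits u. f p * (if q = [] then 1 else 0)) =
        (\<Sum>x\<in>splits u. if x = (u, []) then f u else 0)"
    by (rule sum.cong) (auto simp: splits_def split: if_splits)
  also have "\<dots> = f u"
    by (simp add: sum.delta[OF finite_splits]) (simp add: splits_def)
  finally show ?thesis .
qed

lemma sum_splits_splits_left:
  "(\<Sum>(pq, r)\<in>splits u. \<Sum>(p, q)\<in>splits pq. F p q r) = (\<Sum>(p, q, r)\<in>splits3 u. F p q r)"
proof -
  have "(\<Sum>(pq, r)\<in>splits u. \<Sum>(p, q)\<in>splits pq. F p q r) =
        (\<Sum>(x, y)\<in>Sigma (splits u) (\<lambda>x. splits (fst x)). F (fst y) (snd y) (snd x))"
    by (subst sum.Sigma[symmetric]) (auto simp: split_def)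
  also have "\<dots> = (\<Sum>(p, q, r)\<in>splits3 u. F p q r)"
    by (rule sum.reindex_bij_witness[where i = "\<lambda>(p, q, r). ((p @ q, r), (p, q))"
          and j = "\<lambda>((pq, r), (p, q)). (p, q, r)"]) (auto simp: splits_def splits3_def)
  finally show ?thesis .
qed

lemma sum_splits_splits_right:
  "(\<Sum>(p, qr)\<in>splits u. \<Sum>(q, r)\<in>splits qr. F p q r) = (\<Sum>(p, q, r)\<in>splits3 u. F p q r)"
proof -
  have "(\<Sum>(p, qr)\<in>splits u. \<Sum>(q, r)\<in>splits qr. F p q r) =
        (\<Sum>(x, y)\<in>Sigma (splits u) (\<lambda>x. splits (snd x)). F (fst x) (fst y) (snd y))"
    by (subst sum.Sigma[symmetric]) (auto simp: split_def)
  also have "\<dots> = (\<Sum>(p, q, r)\<in>splits3 u. F p q r)"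
    by (rule sum.reindex_bij_witness[where i = "\<lambda>(p, q, r). ((p, q @ r), (q, r))"
          and j = "\<lambda>((p, qr), (q, r)). (p, q, r)"]) (auto simp: splits_def splits3_def)
  finally show ?thesis .
qed

lemma free_alg_mult_apply: "(f \<star> g) u = (\<Sum>(p, q)\<in>splits u. f p * g q)"
  unfolding free_alg_def using sum_take_drop_eq_sum_splits[of "\<lambda>p q. f p * g q" u] by simp

lemma free_alg_mult_apply_take_drop: "(f \<star> g) u = (\<Sum>i\<le>length u. f (take i u) * g (drop i u))"
  unfolding free_alg_def by simp

lemma free_alg_carrier_iff: "f \<in> carrier free_alg \<longleftrightarrow> finite {u. f u \<noteq> 0}"
  by (simp add: free_alg_def)

lemma free_alg_simps [simp]:
  "f \<oplus>\<^bsub>free_alg\<^esub> g = (\<lambda>u. f u + g u)"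
  "\<one>\<^bsub>free_alg\<^esub> = (\<lambda>u. if u = [] then 1 else 0)"
  "\<zero>\<^bsub>free_alg\<^esub> = (\<lambda>u. 0)"
  by (simp_all add: free_alg_def)

lemma support_mult_subset:
  "{u. (f \<star> g) u \<noteq> 0} \<subseteq> (\<lambda>(p, q). p @ q) ` ({u. f u \<noteq> 0} \<times> {u. g u \<noteq> 0})"
proof
  fix u assume "u \<in> {u. (f \<star> g) u \<noteq> 0}"
  then have "(\<Sum>(p, q)\<in>splits u. f p * g q) \<noteq> 0"
    by (simp add: free_alg_mult_apply)
  then obtain p q where "(p, q) \<in> splits u" "f p * g q \<noteq> 0"
    by (metis (mono_tags, lifting) case_prod_conv sum.neutral surj_pair)
  then show "u \<in> (\<lambda>(p, q). p @ q) ` ({u. f u \<noteq> 0} \<times> {u. g u \<noteq> 0})"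
    by (auto simp: splits_def image_iff)
qed

lemma free_alg_mult_closed:
  "f \<in> carrier free_alg \<Longrightarrow> g \<in> carrier free_alg \<Longrightarrow> f \<star> g \<in> carrier free_alg"
  unfolding free_alg_carrier_iff by (rule finite_subset[OF support_mult_subset]) auto

lemma free_alg_mult_assoc: "(f \<star> g) \<star> h = f \<star> (g \<star> h)"
proof
  fix u
  have "((f \<star> g) \<star> h) u = (\<Sum>(pq, r)\<in>splits u. \<Sum>(p, q)\<in>splits pq. f p * g q * h r)"
    by (simp add: free_alg_mult_apply sum_distrib_right case_prod_beta)
  also have "\<dots> = (\<Sum>(p, q, r)\<in>splits3 u. f p * g q * h r)"
    by (rule sum_splits_splits_left)
  also have "\<dots> = (\<Sum>(p, qr)\<in>splits u. \<Sum>(q, r)\<in>splits qr. f p * g q * h r)"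
    by (rule sum_splits_splits_right[symmetric])
  also have "\<dots> = (f \<star> (g \<star> h)) u"
    by (simp add: free_alg_mult_apply sum_distrib_left case_prod_beta mult.assoc)
  finally show "((f \<star> g) \<star> h) u = (f \<star> (g \<star> h)) u" .
qed

lemma ring_free_alg: "ring (free_alg :: (gwa_letter list \<Rightarrow> 'k::field) ring)"
proof (rule ringI)
  show "abelian_group (free_alg :: (gwa_letter list \<Rightarrow> 'k) ring)"
  proof (rule abelian_groupI)
    fix x y :: "gwa_letter list \<Rightarrow> 'k"
    assume "x \<in> carrier free_alg" "y \<in> carrier free_alg"
    then have "finite ({u. x u \<noteq> 0} \<union> {u. y u \<noteq> 0})"
      by (simp add: free_alg_carrier_iff)
    then show "x \<oplus>\<^bsub>free_alg\<^esub> y \<in> carrier free_alg"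
      unfolding free_alg_carrier_iff by (rule rev_finite_subset) auto
  next
    fix x :: "gwa_letter list \<Rightarrow> 'k"
    assume "x \<in> carrier free_alg"
    then show "\<exists>y\<in>carrier free_alg. y \<oplus>\<^bsub>free_alg\<^esub> x = \<zero>\<^bsub>free_alg\<^esub>"
      by (intro bexI[of _ "\<lambda>u. - x u"]) (auto simp: free_alg_carrier_iff)
  qed (auto simp: free_alg_carrier_iff add.assoc add.commute)
  show "monoid (free_alg :: (gwa_letter list \<Rightarrow> 'k) ring)"
  proof (rule monoidI)
    fix x :: "gwa_letter list \<Rightarrow> 'k"
    show "\<one>\<^bsub>free_alg\<^esub> \<star> x = x"
      by (rule ext) (simp add: free_alg_mult_apply case_prod_beta
                               sum_splits_Nil_left[unfolded case_prod_beta])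
    show "x \<star> \<one>\<^bsub>free_alg\<^esub> = x"
      by (rule ext) (simp add: free_alg_mult_apply case_prod_beta
                               sum_splits_Nil_right[unfolded case_prod_beta])
  qed (auto simp: free_alg_mult_closed free_alg_mult_assoc, simp add: free_alg_carrier_iff)
next
  fix x y z :: "gwa_letter list \<Rightarrow> 'k"
  show "(x \<oplus>\<^bsub>free_alg\<^esub> y) \<star> z = x \<star> z \<oplus>\<^bsub>free_alg\<^esub> y \<star> z"
    by (rule ext) (simp add: free_alg_mult_apply case_prod_beta sum.distrib algebra_simps)
  show "z \<star> (x \<oplus>\<^bsub>free_alg\<^esub> y) = z \<star> x \<oplus>\<^bsub>free_alg\<^esub> z \<star> y"
    by (rule ext) (simp add: free_alg_mult_apply case_prod_beta sum.distrib algebra_simps)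
qed

definition fa_smult :: "'k::field \<Rightarrow> (gwa_letter list \<Rightarrow> 'k) \<Rightarrow> gwa_letter list \<Rightarrow> 'k" where
  "fa_smult c f = (\<lambda>u. c * f u)"

lemma fa_smult_carrier: "f \<in> carrier free_alg \<Longrightarrow> fa_smult c f \<in> carrier free_alg"
  unfolding fa_smult_def free_alg_carrier_iff by (rule finite_subset[rotated]) auto

lemma fa_smult_mult_left: "fa_smult c f \<star> g = fa_smult c (f \<star> g)"
  by (auto simp: free_alg_mult_apply fa_smult_def sum_distrib_left case_prod_beta mult.assoc)

lemma fa_smult_mult_right: "f \<star> fa_smult c g = fa_smult c (f \<star> g)"
  by (auto simp: free_alg_mult_apply fa_smult_def sum_distrib_left case_prod_beta mult.left_commute)

lemma fa_smult_one [simp]: "fa_smult 1 f = f"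
  by (simp add: fa_smult_def)

lemma fa_smult_fa_smult [simp]: "fa_smult c (fa_smult d f) = fa_smult (c * d) f"
  by (simp add: fa_smult_def mult.assoc)

lemma free_alg_uminus: "f \<in> carrier free_alg \<Longrightarrow> \<ominus>\<^bsub>free_alg\<^esub> f = (\<lambda>u. - f u)"
  by (rule abelian_group.minus_equality[OF ring.is_abelian_group[OF ring_free_alg]])
     (auto simp: free_alg_carrier_iff)

lemma free_alg_minus:
  "f \<in> carrier free_alg \<Longrightarrow> g \<in> carrier free_alg \<Longrightarrow> f \<ominus>\<^bsub>free_alg\<^esub> g = (\<lambda>u. f u - g u)"
  by (simp add: a_minus_def free_alg_uminus)

lemma fa_smult_minus:
  "f \<in> carrier free_alg \<Longrightarrow> g \<in> carrier free_alg \<Longrightarrow>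
   fa_smult c f \<ominus>\<^bsub>free_alg\<^esub> fa_smult c g = fa_smult c (f \<ominus>\<^bsub>free_alg\<^esub> g)"
  by (simp add: free_alg_minus fa_smult_carrier) (auto simp: fa_smult_def algebra_simps)

lemma fa_word_carrier [simp]: "fa_word u \<in> carrier free_alg"
  unfolding fa_word_def free_alg_carrier_iff by simp

lemma fa_word_mult: "fa_word u \<star> fa_word v = (fa_word (u @ v) :: _ \<Rightarrow> 'k::field)"
proof
  fix z
  have "(\<Sum>(p, q)\<in>splits z. fa_word u p * fa_word v q) =
        (\<Sum>x\<in>splits z. if x = (u, v) then (1::'k) else 0)"
    by (rule sum.cong) (auto simp: fa_word_def split: if_splits)
  also have "\<dots> = fa_word (u @ v) z"
    by (simp add: sum.delta[OF finite_splits]) (auto simp: splits_def fa_word_def)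
  finally show "(fa_word u \<star> fa_word v) z = (fa_word (u @ v) :: _ \<Rightarrow> 'k) z"
    by (simp add: free_alg_mult_apply)
qed

definition fa_lincomb ::
  "'z set \<Rightarrow> ('z \<Rightarrow> 'k::field) \<Rightarrow> ('z \<Rightarrow> gwa_letter list) \<Rightarrow> gwa_letter list \<Rightarrow> 'k" where
  "fa_lincomb S c w = (\<lambda>u. \<Sum>z\<in>S. c z * fa_word (w z) u)"

lemma fa_lincomb_mult_fa_word:
  assumes "finite S"
  shows "fa_lincomb S c w \<star> fa_word v = fa_lincomb S c (\<lambda>z. w z @ v)"
proof
  fix u
  have "(fa_lincomb S c w \<star> fa_word v) u = (\<Sum>z\<in>S. c z * (fa_word (w z) \<star> fa_word v) u)"
    unfolding free_alg_mult_apply fa_lincomb_def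
    by (simp add: case_prod_beta sum_distrib_left sum_distrib_right mult.assoc sum.swap[of _ S])
  then show "(fa_lincomb S c w \<star> fa_word v) u = fa_lincomb S c (\<lambda>z. w z @ v) u"
    by (simp add: fa_word_mult fa_lincomb_def)
qed

lemma fa_lincomb_apply:
  assumes "finite S" "inj_on w S"
  shows "fa_lincomb S c w u = (if u \<in> w ` S then c (the_inv_into S w u) else 0)"
proof (cases "u \<in> w ` S")
  case True
  then obtain z where z: "z \<in> S" "u = w z" by auto
  have "fa_lincomb S c w u = (\<Sum>z'\<in>S. if z' = z then c z else 0)"
    unfolding fa_lincomb_def
    by (rule sum.cong) (use z assms in \<open>auto simp: fa_word_def inj_on_def\<close>)
  also have "\<dots> = c z"
    using z assms by simp
  finally show ?thesis
    using z assms by (simp add: the_inv_into_f_f)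
next
  case False
  then show ?thesis
    unfolding fa_lincomb_def by (auto intro!: sum.neutral simp: fa_word_def)
qed

lemma fa_lincomb_support: "{u. fa_lincomb S c w u \<noteq> 0} \<subseteq> w ` S"
proof
  fix u assume "u \<in> {u. fa_lincomb S c w u \<noteq> 0}"
  then obtain z where "z \<in> S" "c z * fa_word (w z) u \<noteq> 0"
    unfolding fa_lincomb_def using sum.not_neutral_contains_not_neutral by force
  then show "u \<in> w ` S"
    by (auto simp: fa_word_def split: if_splits)
qed

lemma fa_lincomb_carrier: "finite S \<Longrightarrow> fa_lincomb S c w \<in> carrier free_alg"
  unfolding free_alg_carrier_iff using fa_lincomb_support by (rule finite_subset) simp

lemma fa_poly_eq_lincomb: "fa_poly p = fa_lincomb {..degree p} (coeff p) (\<lambda>j. replicate j Lh)"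
proof
  fix u
  have "(\<Sum>j\<le>degree p. coeff p j * fa_word (replicate j Lh) u) =
        (\<Sum>j\<le>degree p. if j = length u then
                          (if u = replicate (length u) Lh then coeff p j else 0) else 0)"
    by (rule sum.cong) (auto simp: fa_word_def)
  also have "\<dots> = fa_poly p u"
    by (auto simp: fa_poly_def coeff_eq_0)
  finally show "fa_poly p u = fa_lincomb {..degree p} (coeff p) (\<lambda>j. replicate j Lh) u"
    by (simp add: fa_lincomb_def)
qed

lemma fa_poly_carrier [simp]: "fa_poly p \<in> carrier free_alg"
  unfolding fa_poly_eq_lincomb by (rule fa_lincomb_carrier) simp

lemma fa_poly_apply: "fa_poly p u = (if set u \<subseteq> {Lh} then coeff p (length u) else 0)"
proof -
  have "u = replicate (length u) Lh \<longleftrightarrow> set u \<subseteq> {Lh}"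
  proof
    assume "u = replicate (length u) Lh"
    then show "set u \<subseteq> {Lh}"
      by (metis set_replicate_Suc set_replicate_conv_if empty_subsetI subset_refl)
  next
    assume "set u \<subseteq> {Lh}"
    then show "u = replicate (length u) Lh"
      by (intro replicate_length_same[symmetric]) auto
  qed
  then show ?thesis
    unfolding fa_poly_def by simp
qed

lemma fa_poly_mult: "fa_poly p \<star> fa_poly q = fa_poly (p * q)"
proof
  fix u
  show "(fa_poly p \<star> fa_poly q) u = fa_poly (p * q) u"
  proof (cases "set u \<subseteq> {Lh}")
    case True
    have h: "set (take i u) \<subseteq> {Lh}" "set (drop i u) \<subseteq> {Lh}" for i
      using True set_take_subset[of i u] set_drop_subset[of i u] by auto
    have "(\<Sum>i\<le>length u. fa_poly p (take i u) * fa_poly q (drop i u)) =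
          (\<Sum>i\<le>length u. coeff p i * coeff q (length u - i))"
      by (rule sum.cong) (auto simp: fa_poly_apply h min_def)
    also have "\<dots> = coeff (p * q) (length u)"
      by (simp add: coeff_mult)
    finally show ?thesis
      using True by (simp add: free_alg_mult_apply_take_drop fa_poly_apply[of "p * q"])
  next
    case False
    have "\<not> (set (take i u) \<subseteq> {Lh} \<and> set (drop i u) \<subseteq> {Lh})" for i
      using False by (metis append_take_drop_id set_append Un_subset_iff)
    then have "(\<Sum>i\<le>length u. fa_poly p (take i u) * fa_poly q (drop i u)) = 0"
      by (intro sum.neutral) (auto simp: fa_poly_apply)
    then show ?thesis
      using False by (simp add: free_alg_mult_apply_take_drop fa_poly_apply[of "p * q"])
  qed
qed

lemma fa_poly_monom_one: "fa_poly (monom 1 i) = fa_word (replicate i Lh)"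
  by (auto simp: fa_poly_def fa_word_def coeff_monom)

lemma fa_poly_const_mult: "fa_poly [:c:] \<star> f = fa_smult c f"
proof
  fix u
  have "fa_poly [:c:] = (\<lambda>u. c * (if u = [] then 1 else 0))"
    by (rule ext) (auto simp: fa_poly_def coeff_pCons split: nat.splits)
  then have "(fa_poly [:c:] \<star> f) u = c * (\<Sum>(p, q)\<in>splits u. (if p = [] then 1 else 0) * f q)"
    by (simp add: free_alg_mult_apply sum_distrib_left case_prod_beta mult.assoc)
  then show "(fa_poly [:c:] \<star> f) u = fa_smult c f u"
    by (simp add: sum_splits_Nil_left fa_smult_def)
qed

section \<open>Normal-form words\<close>

definition nf_word :: "nat \<times> int \<Rightarrow> gwa_letter list" where
  "nf_word z = replicate (fst z) Lh @
     (if snd z \<ge> 0 then replicate (nat (snd z)) Lx else replicate (nat (- snd z)) Ly)"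

definition nf :: "(nat \<times> int \<Rightarrow> 'k::field) \<Rightarrow> gwa_letter list \<Rightarrow> 'k" where
  "nf K = (\<lambda>u. if u \<in> range nf_word then K (inv_into UNIV nf_word u) else 0)"

lemma count_list_nf_word:
  "count_list (nf_word (i, n)) Lh = i"
  "count_list (nf_word (i, n)) Lx = (if n \<ge> 0 then nat n else 0)"
  "count_list (nf_word (i, n)) Ly = (if n \<ge> 0 then 0 else nat (- n))"
  by (auto simp: nf_word_def count_list_0_iff count_list_eq_length_filter)

lemma inj_nf_word: "inj nf_word"
proof (rule injI)
  fix z z' assume eq: "nf_word z = nf_word z'"
  obtain i n i' n' where z: "z = (i, n)" "z' = (i', n')"
    by fastforce
  show "z = z'"
    using arg_cong[OF eq, of "\<lambda>u. count_list u Lh"] arg_cong[OF eq, of "\<lambda>u. count_list u Lx"]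
      arg_cong[OF eq, of "\<lambda>u. count_list u Ly"]
    by (auto simp: z count_list_nf_word split: if_splits)
qed

lemma nf_nf_word [simp]: "nf K (nf_word z) = K z"
  by (simp add: nf_def inj_nf_word)

lemma nf_support: "{u. nf K u \<noteq> 0} \<subseteq> range nf_word"
  by (auto simp: nf_def split: if_splits)

lemma nf_zero [simp]: "nf (\<lambda>z. 0) = (\<lambda>u. 0)"
  by (auto simp: nf_def)

lemma nf_add: "nf K1 \<oplus>\<^bsub>free_alg\<^esub> nf K2 = nf (\<lambda>z. K1 z + K2 z)"
  by (auto simp: nf_def)

lemma fa_smult_nf: "fa_smult c (nf K) = nf (\<lambda>z. c * K z)"
  by (auto simp: nf_def fa_smult_def)

lemma nf_carrier: "finite {z. K z \<noteq> 0} \<Longrightarrow> nf K \<in> carrier free_alg"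
proof -
  assume fin: "finite {z. K z \<noteq> 0}"
  have "{u. nf K u \<noteq> 0} \<subseteq> nf_word ` {z. K z \<noteq> 0}"
    by (auto simp: nf_def inj_nf_word split: if_splits)
  then show ?thesis
    unfolding free_alg_carrier_iff using fin by (rule finite_subset[OF _ finite_imageI])
qed

lemma nf_diff:
  "finite {z. K1 z \<noteq> 0} \<Longrightarrow> finite {z. K2 z \<noteq> 0} \<Longrightarrow>
   nf K1 \<ominus>\<^bsub>free_alg\<^esub> nf K2 = nf (\<lambda>z. K1 z - K2 z)"
  by (simp add: free_alg_minus nf_carrier) (auto simp: nf_def)

lemma fa_word_eq_nf: "fa_word (nf_word z) = nf (\<lambda>z'. if z' = z then 1 else 0)"
proof
  fix u
  show "fa_word (nf_word z) u = nf (\<lambda>z'. if z' = z then 1 else 0) u"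
    by (cases "u \<in> range nf_word") (auto simp: nf_def fa_word_def inj_nf_word inj_eq)
qed

lemma fa_lincomb_nf_word:
  assumes "finite S"
  shows "fa_lincomb S c nf_word = nf (\<lambda>z. if z \<in> S then c z else 0)"
proof
  fix u
  have inj: "inj_on nf_word S"
    using inj_nf_word by (rule inj_on_subset) simp
  show "fa_lincomb S c nf_word u = nf (\<lambda>z. if z \<in> S then c z else 0) u"
  proof (cases "u \<in> range nf_word")
    case True
    then obtain z where "u = nf_word z" by auto
    then show ?thesis
      using inj_nf_word
      by (auto simp: fa_lincomb_apply[OF assms inj] the_inv_into_f_f[OF inj] inj_eq)
  next
    case False
    then show ?thesis
      by (auto simp: fa_lincomb_apply[OF assms inj] nf_def)
  qed
qed

lemma nf_eq_lincomb:
  "finite {z. K z \<noteq> 0} \<Longrightarrow> nf K = fa_lincomb {z. K z \<noteq> 0} K nf_word"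
  by (subst fa_lincomb_nf_word) (auto intro!: arg_cong[where f = nf])

lemma nf_word_Lh: "nf_word (i, n) = replicate i Lh @ nf_word (0, n)"
  by (simp add: nf_word_def)

lemma nf_word_Cons_Lh: "Lh # nf_word (i, n) = nf_word (Suc i, n)"
  by (simp add: nf_word_def)

lemma nf_word_Cons_Lx: "n \<ge> 0 \<Longrightarrow> Lx # nf_word (0, n) = nf_word (0, n + 1)"
  by (simp add: nf_word_def nat_add_distrib)

lemma nf_word_Cons_Ly: "n \<le> 0 \<Longrightarrow> Ly # nf_word (0, n) = nf_word (0, n - 1)"
proof -
  assume "n \<le> 0"
  then have "nat (- (n - 1)) = Suc (nat (- n))"
    by simp
  with \<open>n \<le> 0\<close> show ?thesis
    by (cases "n = 0") (auto simp: nf_word_def)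
qed

lemma nf_word_neg: "n < 0 \<Longrightarrow> nf_word (0, n) = Ly # nf_word (0, n + 1)"
  using nf_word_Cons_Ly[of "n + 1"] by simp

lemma nf_word_pos: "n > 0 \<Longrightarrow> nf_word (0, n) = Lx # nf_word (0, n - 1)"
  using nf_word_Cons_Lx[of "n - 1"] by simp

lemma fa_word_nf_word: "fa_word (nf_word (i, n)) = fa_poly (monom 1 i) \<star> fa_word (nf_word (0, n))"
  by (simp add: fa_poly_monom_one fa_word_mult nf_word_Lh[of i n])

lemma fa_poly_mult_nf_word:
  "fa_poly p \<star> fa_word (nf_word (0, n)) = nf (\<lambda>z. if snd z = n then coeff p (fst z) else 0)"
proof -
  have "fa_poly p \<star> fa_word (nf_word (0, n)) = fa_lincomb {..degree p} (coeff p) (\<lambda>j. nf_word (j, n))"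
    unfolding fa_poly_eq_lincomb by (simp add: fa_lincomb_mult_fa_word nf_word_Lh[symmetric])
  also have "\<dots> = fa_lincomb ((\<lambda>j. (j, n)) ` {..degree p}) (\<lambda>z. coeff p (fst z)) nf_word"
    unfolding fa_lincomb_def by (subst sum.reindex) (auto simp: inj_on_def)
  also have "\<dots> = nf (\<lambda>z. if snd z = n then coeff p (fst z) else 0)"
    by (subst fa_lincomb_nf_word) (auto simp: image_iff coeff_eq_0 intro!: arg_cong[where f = nf])
  finally show ?thesis .
qed

section \<open>Actions on sequences of polynomials\<close>

lemma smult_sum_right: "smult c (sum f S) = (\<Sum>i\<in>S. smult c (f i))"
proof -
  have "smult c (sum f S) = [:c:] * sum f S"
    by simp
  also have "\<dots> = (\<Sum>i\<in>S. [:c:] * f i)"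
    by (rule sum_distrib_left)
  finally show ?thesis
    by simp
qed

type_synonym 'k polyseq = "int \<Rightarrow> 'k poly"

definition polyseq_linear :: "('k::field polyseq \<Rightarrow> 'k polyseq) \<Rightarrow> bool" where
  "polyseq_linear L \<longleftrightarrow>
     (\<forall>v w. L (\<lambda>n. v n + w n) = (\<lambda>n. L v n + L w n)) \<and>
     (\<forall>c v. L (\<lambda>n. smult c (v n)) = (\<lambda>n. smult c (L v n)))"

lemma polyseq_linear_zero: "polyseq_linear L \<Longrightarrow> L (\<lambda>n. 0) = (\<lambda>n. 0)"
proof -
  assume "polyseq_linear L"
  then have "L (\<lambda>n. smult 0 (v n)) = (\<lambda>n. smult 0 (L v n))" for v
    unfolding polyseq_linear_def by blast
  from this[of "\<lambda>n. 0"] show ?thesis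
    by simp
qed

lemma polyseq_linear_sum:
  assumes "polyseq_linear L" "finite S"
  shows "L (\<lambda>n. \<Sum>j\<in>S. smult (c j) (v j n)) = (\<lambda>n. \<Sum>j\<in>S. smult (c j) (L (v j) n))"
  using assms(2)
proof (induction S)
  case empty
  then show ?case
    using polyseq_linear_zero[OF assms(1)] by simp
next
  case (insert x F)
  have "L (\<lambda>n. \<Sum>j\<in>insert x F. smult (c j) (v j n)) =
        L (\<lambda>n. smult (c x) (v x n) + (\<Sum>j\<in>F. smult (c j) (v j n)))"
    using insert by simp
  also have "\<dots> = (\<lambda>n. L (\<lambda>n. smult (c x) (v x n)) n + L (\<lambda>n. \<Sum>j\<in>F. smult (c j) (v j n)) n)"
    using assms(1) unfolding polyseq_linear_def by simp
  also have "\<dots> = (\<lambda>n. \<Sum>j\<in>insert x F. smult (c j) (L (v j) n))"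
    using insert assms(1) unfolding polyseq_linear_def by simp
  finally show ?case .
qed

lemma polyseq_linear_id: "polyseq_linear id"
  unfolding polyseq_linear_def by simp

lemma polyseq_linear_comp: "polyseq_linear L \<Longrightarrow> polyseq_linear M \<Longrightarrow> polyseq_linear (L \<circ> M)"
  unfolding polyseq_linear_def by simp

lemma polyseq_linear_funpow: "polyseq_linear L \<Longrightarrow> polyseq_linear (L ^^ k)"
  by (induction k) (auto simp: polyseq_linear_id polyseq_linear_comp)

lemma polyseq_linear_mult: "polyseq_linear (\<lambda>v n. q * v n)"
  unfolding polyseq_linear_def by (simp add: algebra_simps)

primrec word_op ::
  "(gwa_letter \<Rightarrow> 'k::field polyseq \<Rightarrow> 'k polyseq) \<Rightarrow> gwa_letter list \<Rightarrow> 'k polyseq \<Rightarrow> 'k polyseq"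
where
  "word_op Op [] = id"
| "word_op Op (l # u) = Op l \<circ> word_op Op u"

lemma word_op_append: "word_op Op (u @ v) = word_op Op u \<circ> word_op Op v"
  by (induction u) auto

lemma word_op_replicate: "word_op Op (replicate k l) = Op l ^^ k"
  by (induction k) auto

lemma polyseq_linear_word_op: "(\<And>l. polyseq_linear (Op l)) \<Longrightarrow> polyseq_linear (word_op Op u)"
  by (induction u) (auto simp: polyseq_linear_id polyseq_linear_comp)

definition fa_act ::
  "(gwa_letter \<Rightarrow> 'k::field polyseq \<Rightarrow> 'k polyseq) \<Rightarrow> (gwa_letter list \<Rightarrow> 'k) \<Rightarrow>
   'k polyseq \<Rightarrow> 'k polyseq" where
  "fa_act Op f v = (\<lambda>n. \<Sum>u\<in>{u. f u \<noteq> 0}. smult (f u) (word_op Op u v n))"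

lemma fa_act_eq_sum_superset:
  assumes "finite T" "{u. f u \<noteq> 0} \<subseteq> T"
  shows "fa_act Op f v = (\<lambda>n. \<Sum>u\<in>T. smult (f u) (word_op Op u v n))"
  unfolding fa_act_def by (rule ext, rule sum.mono_neutral_left) (use assms in auto)

lemma fa_act_add:
  assumes "f \<in> carrier free_alg" "g \<in> carrier free_alg"
  shows "fa_act Op (f \<oplus>\<^bsub>free_alg\<^esub> g) v = (\<lambda>n. fa_act Op f v n + fa_act Op g v n)"
proof -
  let ?T = "{u. f u \<noteq> 0} \<union> {u. g u \<noteq> 0}"
  have T: "finite ?T"
    using assms by (simp add: free_alg_carrier_iff)
  have sub: "{u. (f \<oplus>\<^bsub>free_alg\<^esub> g) u \<noteq> 0} \<subseteq> ?T"
    by auto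
  show ?thesis
    unfolding fa_act_eq_sum_superset[OF T sub] fa_act_eq_sum_superset[OF T, of f, OF Un_upper1]
      fa_act_eq_sum_superset[OF T, of g, OF Un_upper2]
    by (auto simp: sum.distrib smult_add_left)
qed

lemma fa_act_uminus:
  "f \<in> carrier free_alg \<Longrightarrow> fa_act Op (\<ominus>\<^bsub>free_alg\<^esub> f) v = (\<lambda>n. - fa_act Op f v n)"
  by (simp add: free_alg_uminus fa_act_def sum_negf)

lemma fa_act_minus:
  assumes "f \<in> carrier free_alg" "g \<in> carrier free_alg"
  shows "fa_act Op (f \<ominus>\<^bsub>free_alg\<^esub> g) v = (\<lambda>n. fa_act Op f v n - fa_act Op g v n)"
proof -
  have "\<ominus>\<^bsub>free_alg\<^esub> g \<in> carrier free_alg"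
    using assms(2) by (simp add: free_alg_uminus free_alg_carrier_iff)
  then show ?thesis
    unfolding a_minus_def using fa_act_add[OF assms(1)] fa_act_uminus[OF assms(2)] by simp
qed

lemma fa_act_fa_word: "fa_act Op (fa_word w) v = word_op Op w v"
proof -
  have "fa_act Op (fa_word w) v = (\<lambda>n. \<Sum>u\<in>{w}. smult (fa_word w u) (word_op Op u v n))"
    by (rule fa_act_eq_sum_superset) (auto simp: fa_word_def split: if_splits)
  then show ?thesis
    by (simp add: fa_word_def)
qed

lemma fa_act_one: "fa_act Op \<one>\<^bsub>free_alg\<^esub> = id"
  using fa_act_fa_word[of Op "[]"] by (simp add: fa_word_def fun_eq_iff)

lemma polyseq_linear_fa_act: "(\<And>l. polyseq_linear (Op l)) \<Longrightarrow> polyseq_linear (fa_act Op f)"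
  using polyseq_linear_word_op[of Op]
  unfolding polyseq_linear_def fa_act_def
  by (auto simp: sum.distrib smult_add_right smult_sum_right fun_eq_iff mult.commute)

lemma fa_act_mult:
  assumes Op: "\<And>l. polyseq_linear (Op l)"
    and f: "f \<in> carrier free_alg" and g: "g \<in> carrier free_alg"
  shows "fa_act Op (f \<star> g) v = fa_act Op f (fa_act Op g v)"
proof (rule ext)
  fix n
  let ?Sf = "{u. f u \<noteq> 0}" and ?Sg = "{u. g u \<noteq> 0}"
  let ?T = "(\<lambda>(p, q). p @ q) ` (?Sf \<times> ?Sg)"
  let ?F = "\<lambda>pq. smult (f (fst pq) * g (snd pq)) (word_op Op (fst pq @ snd pq) v n)"
  have fin: "finite ?Sf" "finite ?Sg"
    using f g by (auto simp: free_alg_carrier_iff)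
  then have T: "finite ?T"
    by simp
  have "fa_act Op (f \<star> g) v n = (\<Sum>u\<in>?T. smult ((f \<star> g) u) (word_op Op u v n))"
    using fa_act_eq_sum_superset[OF T support_mult_subset] by simp
  also have "\<dots> = (\<Sum>u\<in>?T. \<Sum>pq\<in>splits u. ?F pq)"
    by (rule sum.cong[OF refl])
       (auto simp: free_alg_mult_apply smult_sum case_prod_beta splits_def intro!: sum.cong)
  also have "\<dots> = (\<Sum>(u, pq)\<in>Sigma ?T splits. ?F pq)"
    using T by (subst sum.Sigma[symmetric]) (auto simp: split_def)
  also have "\<dots> = (\<Sum>pq\<in>{pq. fst pq @ snd pq \<in> ?T}. ?F pq)"
    by (rule sum.reindex_bij_witness[where i = "\<lambda>pq. (fst pq @ snd pq, pq)" and j = snd])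
       (auto simp: splits_def)
  also have "\<dots> = (\<Sum>pq\<in>?Sf \<times> ?Sg. ?F pq)"
  proof (rule sum.mono_neutral_right)
    have "{pq. fst pq @ snd pq \<in> ?T} \<subseteq> (\<Union>u\<in>?T. splits u)"
      by (auto simp: splits_def)
    then show "finite {pq. fst pq @ snd pq \<in> ?T}"
      using T by (rule finite_subset[OF _ finite_UN_I]) simp
  qed auto
  also have "\<dots> = (\<Sum>p\<in>?Sf. smult (f p) (\<Sum>q\<in>?Sg. smult (g q) (word_op Op p (word_op Op q v) n)))"
    by (simp add: sum.cartesian_product' smult_sum_right word_op_append)
  also have "\<dots> = fa_act Op f (fa_act Op g v) n"
    unfolding fa_act_def polyseq_linear_sum[OF polyseq_linear_word_op[OF Op] fin(2)] ..
  finally show "fa_act Op (f \<star> g) v n = fa_act Op f (fa_act Op g v) n" .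
qed

lemma fa_act_fa_word_mult:
  "(\<And>l. polyseq_linear (Op l)) \<Longrightarrow> g \<in> carrier free_alg \<Longrightarrow>
   fa_act Op (fa_word [l] \<star> g) v = Op l (fa_act Op g v)"
  by (simp add: fa_act_mult fa_act_fa_word)

lemma fa_act_mult_fa_word:
  "(\<And>l. polyseq_linear (Op l)) \<Longrightarrow> g \<in> carrier free_alg \<Longrightarrow>
   fa_act Op (g \<star> fa_word [l]) v = fa_act Op g (Op l v)"
  by (simp add: fa_act_mult fa_act_fa_word)

lemma fa_act_mult_comp:
  "(\<And>l. polyseq_linear (Op l)) \<Longrightarrow> f \<in> carrier free_alg \<Longrightarrow> g \<in> carrier free_alg \<Longrightarrow>
   fa_act Op (f \<star> g) = fa_act Op f \<circ> fa_act Op g"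
  by (rule ext) (simp add: fa_act_mult)

lemma fa_act_add_fun:
  "f \<in> carrier free_alg \<Longrightarrow> g \<in> carrier free_alg \<Longrightarrow>
   fa_act Op (f \<oplus>\<^bsub>free_alg\<^esub> g) = (\<lambda>v n. fa_act Op f v n + fa_act Op g v n)"
  by (rule ext) (simp add: fa_act_add del: free_alg_simps)

lemma fa_act_lincomb:
  assumes "finite S" "inj_on w S"
  shows "fa_act Op (fa_lincomb S c w) v = (\<lambda>n. \<Sum>z\<in>S. smult (c z) (word_op Op (w z) v n))"
proof -
  have "fa_act Op (fa_lincomb S c w) v =
        (\<lambda>n. \<Sum>u\<in>w ` S. smult (fa_lincomb S c w u) (word_op Op u v n))"
    by (rule fa_act_eq_sum_superset[OF finite_imageI[OF assms(1)] fa_lincomb_support])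
  also have "\<dots> = (\<lambda>n. \<Sum>z\<in>S. smult (c z) (word_op Op (w z) v n))"
    using assms by (simp add: sum.reindex fa_lincomb_apply the_inv_into_f_f)
  finally show ?thesis .
qed

lemma fa_act_fa_poly:
  assumes "Op Lh = (\<lambda>v n. q * v n)"
  shows "fa_act Op (fa_poly p) v = (\<lambda>n. pcompose p q * v n)"
proof -
  have inj: "inj_on (\<lambda>j. replicate j Lh) {..degree p}"
    by (auto simp: inj_on_def)
  have pow: "(Op Lh ^^ j) v = (\<lambda>n. q ^ j * v n)" for j
    by (induction j) (auto simp: assms)
  have "pcompose p q = (\<Sum>j\<le>degree p. smult (coeff p j) (q ^ j))"
    by (simp add: pcompose_altdef poly_altdef degree_map_poly coeff_map_poly)
  then show ?thesis
    unfolding fa_poly_eq_lincomb fa_act_lincomb[OF finite_atMost inj] word_op_replicate pow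
    by (simp add: sum_distrib_right)
qed

lemma fa_act_nf:
  "finite {z. K z \<noteq> 0} \<Longrightarrow>
   fa_act Op (nf K) v = (\<lambda>n. \<Sum>z\<in>{z. K z \<noteq> 0}. smult (K z) (word_op Op (nf_word z) v n))"
  by (simp add: nf_eq_lincomb fa_act_lincomb inj_on_subset[OF inj_nf_word])

section \<open>The defining ideal and normal forms\<close>

lemma free_alg_idealI:
  fixes J :: "(gwa_letter list \<Rightarrow> 'k::field) set"
  assumes "J \<subseteq> carrier free_alg" "\<zero>\<^bsub>free_alg\<^esub> \<in> J"
    and "\<And>a. a \<in> J \<Longrightarrow> \<ominus>\<^bsub>free_alg\<^esub> a \<in> J"
    and "\<And>a b. a \<in> J \<Longrightarrow> b \<in> J \<Longrightarrow> a \<oplus>\<^bsub>free_alg\<^esub> b \<in> J"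
    and "\<And>a x. a \<in> J \<Longrightarrow> x \<in> carrier free_alg \<Longrightarrow> x \<star> a \<in> J"
    and "\<And>a x. a \<in> J \<Longrightarrow> x \<in> carrier free_alg \<Longrightarrow> a \<star> x \<in> J"
  shows "ideal J free_alg"
proof -
  interpret ring "free_alg :: (gwa_letter list \<Rightarrow> 'k) ring"
    by (rule ring_free_alg)
  have "subgroup J (add_monoid free_alg)"
    by (rule add.subgroupI) (use assms in auto)
  then show ?thesis
    by (rule idealI[OF ring_free_alg _ assms(5,6)])
qed

definition fa_act_kernel ::
  "(gwa_letter \<Rightarrow> 'k::field polyseq \<Rightarrow> 'k polyseq) \<Rightarrow> (gwa_letter list \<Rightarrow> 'k) set" where
  "fa_act_kernel Op = {f \<in> carrier free_alg. \<forall>v. fa_act Op f v = (\<lambda>n. 0)}"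

lemma ideal_fa_act_kernel:
  fixes Op :: "gwa_letter \<Rightarrow> 'k::field polyseq \<Rightarrow> 'k polyseq"
  assumes Op: "\<And>l. polyseq_linear (Op l)"
  shows "ideal (fa_act_kernel Op) free_alg"
proof -
  interpret ring "free_alg :: (gwa_letter list \<Rightarrow> 'k) ring"
    by (rule ring_free_alg)
  have zero: "fa_act Op f (\<lambda>n. 0) = (\<lambda>n. 0)" for f
    by (rule polyseq_linear_zero[OF polyseq_linear_fa_act[OF Op]])
  show ?thesis
  proof (rule free_alg_idealI)
    fix f assume "f \<in> fa_act_kernel Op"
    then show "\<ominus>\<^bsub>free_alg\<^esub> f \<in> fa_act_kernel Op"
      using fa_act_uminus[of f Op] by (auto simp: fa_act_kernel_def simp del: free_alg_simps)
  next
    fix f g assume "f \<in> fa_act_kernel Op" "g \<in> fa_act_kernel Op"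
    then show "f \<oplus>\<^bsub>free_alg\<^esub> g \<in> fa_act_kernel Op"
      using fa_act_add[of f g Op] by (auto simp: fa_act_kernel_def simp del: free_alg_simps)
  next
    fix f x :: "gwa_letter list \<Rightarrow> 'k"
    assume "f \<in> fa_act_kernel Op" and x: "x \<in> carrier free_alg"
    then show "x \<star> f \<in> fa_act_kernel Op" "f \<star> x \<in> fa_act_kernel Op"
      using fa_act_mult[OF Op x, of f] fa_act_mult[OF Op _ x, of f] zero
      by (auto simp: fa_act_kernel_def)
  qed (auto simp: fa_act_kernel_def fa_act_def free_alg_carrier_iff)
qed

lemma gwa_rels_carrier: "gwa_rels a h0 \<subseteq> carrier free_alg"
proof -
  interpret ring "free_alg :: (gwa_letter list \<Rightarrow> 'k::field) ring"
    by (rule ring_free_alg)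
  show ?thesis
    unfolding gwa_rels_def by (auto simp del: free_alg_simps)
qed

lemma gwa_ideal_subset_fa_act_kernel:
  assumes "\<And>l. polyseq_linear (Op l)"
    and "\<And>f v. f \<in> gwa_rels a h0 \<Longrightarrow> fa_act Op f v = (\<lambda>n. 0)"
  shows "gwa_ideal a h0 \<subseteq> fa_act_kernel Op"
  unfolding gwa_ideal_def
  by (rule ring.genideal_minimal[OF ring_free_alg ideal_fa_act_kernel[OF assms(1)]])
     (use assms(2) gwa_rels_carrier[of a h0] in \<open>auto simp: fa_act_kernel_def\<close>)

lemma ideal_gwa_ideal: "ideal (gwa_ideal a h0) free_alg"
  unfolding gwa_ideal_def by (rule ring.genideal_ideal[OF ring_free_alg gwa_rels_carrier])

abbreviation fa_x :: "gwa_letter list \<Rightarrow> 'k::field" where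
  "fa_x \<equiv> fa_word [Lx]"

abbreviation fa_y :: "gwa_letter list \<Rightarrow> 'k::field" where
  "fa_y \<equiv> fa_word [Ly]"

locale gwa_quot =
  fixes a :: "'k::field poly" and h0 :: 'k

sublocale gwa_quot \<subseteq> I: ideal "gwa_ideal a h0" free_alg
  by (rule ideal_gwa_ideal)

context gwa_quot
begin

abbreviation cls :: "(gwa_letter list \<Rightarrow> 'k) \<Rightarrow> (gwa_letter list \<Rightarrow> 'k) set" where
  "cls \<equiv> gwa_class a h0"

lemma cls_eq_iff:
  assumes "f \<in> carrier free_alg" "g \<in> carrier free_alg"
  shows "cls f = cls g \<longleftrightarrow> f \<ominus>\<^bsub>free_alg\<^esub> g \<in> gwa_ideal a h0"
  unfolding gwa_class_def
  using I.a_rcos_module_minus[OF ring_free_alg assms(2,1)] I.a_rcos_self[OF assms(1)]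
    I.a_repr_independence'[OF _ assms(2)]
  by blast

lemma cls_carrier: "f \<in> carrier free_alg \<Longrightarrow> cls f \<in> carrier (gwa a h0)"
  unfolding gwa_def FactRing_def gwa_class_def by (simp add: I.a_rcosetsI[OF I.a_subset])

lemma cls_mult:
  "f \<in> carrier free_alg \<Longrightarrow> g \<in> carrier free_alg \<Longrightarrow> cls f \<otimes>\<^bsub>gwa a h0\<^esub> cls g = cls (f \<star> g)"
  by (simp add: gwa_def FactRing_def gwa_class_def I.rcoset_mult_add)

lemma cls_add:
  "f \<in> carrier free_alg \<Longrightarrow> g \<in> carrier free_alg \<Longrightarrow>
   cls f \<oplus>\<^bsub>gwa a h0\<^esub> cls g = cls (f \<oplus>\<^bsub>free_alg\<^esub> g)"
  by (simp add: gwa_def FactRing_def gwa_class_def I.a_rcos_sum)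

lemma cls_mult_cong:
  assumes "f \<in> carrier free_alg" "g \<in> carrier free_alg" "f' \<in> carrier free_alg" "g' \<in> carrier free_alg"
    and "cls f = cls f'" "cls g = cls g'"
  shows "cls (f \<star> g) = cls (f' \<star> g')"
  using cls_mult[OF assms(1,2)] cls_mult[OF assms(3,4)] assms(5,6) by simp

lemma cls_add_cong:
  assumes "f \<in> carrier free_alg" "g \<in> carrier free_alg" "f' \<in> carrier free_alg" "g' \<in> carrier free_alg"
    and "cls f = cls f'" "cls g = cls g'"
  shows "cls (f \<oplus>\<^bsub>free_alg\<^esub> g) = cls (f' \<oplus>\<^bsub>free_alg\<^esub> g')"
  using cls_add[OF assms(1,2)] cls_add[OF assms(3,4)] assms(5,6) by simp

lemma rep_cls:
  assumes "C \<in> carrier (gwa a h0)"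
  shows "(SOME g. g \<in> C) \<in> carrier free_alg" "cls (SOME g. g \<in> C) = C"
proof -
  obtain g where g: "g \<in> carrier free_alg" "C = gwa_ideal a h0 +>\<^bsub>free_alg\<^esub> g"
    using assms unfolding gwa_def FactRing_def A_RCOSETS_def RCOSETS_def a_r_coset_def by auto
  then have "g \<in> C"
    using I.a_rcos_self by simp
  then have some: "(SOME g. g \<in> C) \<in> C"
    by (rule someI[of "\<lambda>g. g \<in> C"])
  then show "(SOME g. g \<in> C) \<in> carrier free_alg"
    using g I.a_rcosets_carrier I.a_rcosetsI[OF I.a_subset] by (metis subsetD)
  then show "cls (SOME g. g \<in> C) = C"
    using some g I.a_repr_independence' unfolding gwa_class_def by metis
qed

lemma cls_eq_of_rel:
  assumes "f \<in> carrier free_alg" "g \<in> carrier free_alg" "f \<ominus>\<^bsub>free_alg\<^esub> g \<in> gwa_rels a h0"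
  shows "cls f = cls g"
  using assms I.genideal_self[OF gwa_rels_carrier] cls_eq_iff unfolding gwa_ideal_def by blast

lemma cls_yx: "cls (fa_y \<star> fa_x) = cls (fa_poly a)"
  by (rule cls_eq_of_rel) (auto simp: gwa_rels_def intro: free_alg_mult_closed)

lemma cls_xy: "cls (fa_x \<star> fa_y) = cls (fa_poly (gwa_sigma h0 a))"
  by (rule cls_eq_of_rel) (auto simp: gwa_rels_def intro: free_alg_mult_closed)

lemma cls_x_poly: "cls (fa_x \<star> fa_poly p) = cls (fa_poly (gwa_sigma h0 p) \<star> fa_x)"
  by (rule cls_eq_of_rel) (auto simp: gwa_rels_def intro: free_alg_mult_closed)

lemma cls_poly_y: "cls (fa_poly p \<star> fa_y) = cls (fa_y \<star> fa_poly (gwa_sigma h0 p))"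
  by (rule cls_eq_of_rel) (auto simp: gwa_rels_def intro: free_alg_mult_closed)

end

lemma free_alg_induct:
  fixes M :: "(gwa_letter list \<Rightarrow> 'k::field) set"
  assumes "f \<in> carrier free_alg" "{u. f u \<noteq> 0} \<subseteq> W"
    and zero: "(\<lambda>u. 0) \<in> M"
    and add: "\<And>f g. f \<in> M \<Longrightarrow> g \<in> M \<Longrightarrow> (\<lambda>u. f u + g u) \<in> M"
    and smult: "\<And>c f. f \<in> M \<Longrightarrow> fa_smult c f \<in> M"
    and word: "\<And>u. u \<in> W \<Longrightarrow> fa_word u \<in> M"
  shows "f \<in> M"
proof -
  have "\<forall>f. {u. f u \<noteq> 0} \<subseteq> S \<longrightarrow> S \<subseteq> W \<longrightarrow> f \<in> M" if "finite S" for S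
    using that
  proof (induction S)
    case empty
    then show ?case
      using zero by (auto simp: fun_eq_iff)
  next
    case (insert x S)
    show ?case
    proof (intro allI impI)
      fix f :: "gwa_letter list \<Rightarrow> 'k"
      assume supp: "{u. f u \<noteq> 0} \<subseteq> insert x S" and W: "insert x S \<subseteq> W"
      have "{u. (f(x := 0)) u \<noteq> 0} \<subseteq> S"
        using supp by auto
      then have "f(x := 0) \<in> M"
        using insert.IH W by blast
      moreover have "fa_smult (f x) (fa_word x) \<in> M"
        using smult word W by auto
      moreover have "f = (\<lambda>u. (f(x := 0)) u + fa_smult (f x) (fa_word x) u)"
        by (auto simp: fa_smult_def fa_word_def)
      ultimately show "f \<in> M"
        using add by metis
    qed
  qed
  then show ?thesis
    using assms(1,2) by (auto simp: free_alg_carrier_iff)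
qed

lemma gwa_sigma_inverse: "gwa_sigma h0 (gwa_sigma (- h0) p) = p"
  by (simp add: gwa_sigma_def pcompose_assoc[symmetric] pcompose_pCons)

context gwa_quot
begin

definition nf_span :: "(gwa_letter list \<Rightarrow> 'k) set" where
  "nf_span = {f \<in> carrier free_alg. \<exists>K. finite {z. K z \<noteq> 0} \<and> cls f = cls (nf K)}"

lemma nf_span_cls: "cls f = cls g \<Longrightarrow> g \<in> nf_span \<Longrightarrow> f \<in> carrier free_alg \<Longrightarrow> f \<in> nf_span"
  unfolding nf_span_def by auto

lemma nf_in_nf_span: "finite {z. K z \<noteq> 0} \<Longrightarrow> nf K \<in> nf_span"
  unfolding nf_span_def using nf_carrier by blast

lemma nf_span_add:
  assumes "f \<in> nf_span" "g \<in> nf_span"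
  shows "(\<lambda>u. f u + g u) \<in> nf_span"
proof -
  obtain K1 K2 where K: "finite {z. K1 z \<noteq> 0}" "cls f = cls (nf K1)"
      "finite {z. K2 z \<noteq> 0}" "cls g = cls (nf K2)"
    and fg: "f \<in> carrier free_alg" "g \<in> carrier free_alg"
    using assms unfolding nf_span_def by blast
  have "finite {z. K1 z + K2 z \<noteq> 0}"
    by (rule finite_subset[of _ "{z. K1 z \<noteq> 0} \<union> {z. K2 z \<noteq> 0}"]) (use K in auto)
  moreover have "cls (f \<oplus>\<^bsub>free_alg\<^esub> g) = cls (nf (\<lambda>z. K1 z + K2 z))"
    using cls_add_cong[OF fg nf_carrier nf_carrier] K by (simp only: nf_add)
  moreover have "f \<oplus>\<^bsub>free_alg\<^esub> g \<in> carrier free_alg"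
    using fg by (rule I.a_closed)
  ultimately show ?thesis
    unfolding nf_span_def by auto
qed

lemma nf_span_smult: "f \<in> nf_span \<Longrightarrow> fa_smult c f \<in> nf_span"
proof -
  assume "f \<in> nf_span"
  then obtain K where K: "finite {z. K z \<noteq> 0}" "cls f = cls (nf K)" and f: "f \<in> carrier free_alg"
    unfolding nf_span_def by blast
  have "finite {z. c * K z \<noteq> 0}"
    by (rule finite_subset[OF _ K(1)]) auto
  moreover have "cls (fa_smult c f) = cls (nf (\<lambda>z. c * K z))"
    using cls_mult_cong[OF fa_poly_carrier f fa_poly_carrier nf_carrier[OF K(1)], of "[:c:]" "[:c:]"] K(2)
    by (simp add: fa_poly_const_mult fa_smult_nf)
  ultimately show ?thesis
    using fa_smult_carrier[of f c] f unfolding nf_span_def by (intro CollectI conjI exI) auto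
qed

lemma fa_poly_mult_nf_word_in_nf_span: "fa_poly q \<star> fa_word (nf_word (0, m)) \<in> nf_span"
proof -
  have "finite {z. (if snd z = m then coeff q (fst z) else 0) \<noteq> 0}"
    by (rule finite_subset[of _ "{..degree q} \<times> {m}"]) (auto simp: coeff_eq_0 intro: ccontr)
  then show ?thesis
    by (simp add: fa_poly_mult_nf_word nf_in_nf_span)
qed

lemma x_poly_nf_word_in_nf_span: "fa_x \<star> (fa_poly p \<star> fa_word (nf_word (0, n))) \<in> nf_span"
proof -
  note carrier = free_alg_mult_closed fa_word_carrier fa_poly_carrier
  let ?P = "fa_poly p" and ?Q = "fa_poly (gwa_sigma h0 p)"
  have xP: "cls ((fa_x \<star> ?P) \<star> g) = cls ((?Q \<star> fa_x) \<star> g)" if "g \<in> carrier free_alg" for g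
    by (rule cls_mult_cong[OF _ that _ that _ refl]) (auto intro: carrier simp: cls_x_poly)
  show ?thesis
  proof (cases "n \<ge> 0")
    case True
    have "cls (fa_x \<star> (?P \<star> fa_word (nf_word (0, n)))) = cls (?Q \<star> fa_word (nf_word (0, n + 1)))"
      using xP[of "fa_word (nf_word (0, n))"]
      by (simp add: free_alg_mult_assoc fa_word_mult nf_word_Cons_Lx[OF True])
    then show ?thesis
      by (rule nf_span_cls[OF _ fa_poly_mult_nf_word_in_nf_span]) (auto intro: carrier)
  next
    case False
    let ?W = "fa_word (nf_word (0, n + 1))"
    have "cls (fa_x \<star> (?P \<star> fa_word (nf_word (0, n)))) = cls (?Q \<star> ((fa_x \<star> fa_y) \<star> ?W))"
      using xP[of "fa_y \<star> ?W"] False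
      by (simp add: free_alg_mult_assoc fa_word_mult nf_word_neg)
    also have "\<dots> = cls (?Q \<star> (fa_poly (gwa_sigma h0 a) \<star> ?W))"
      by (rule cls_mult_cong[OF _ _ _ _ refl cls_mult_cong[OF _ _ _ _ cls_xy refl]])
         (auto intro: carrier)
    also have "\<dots> = cls (fa_poly (gwa_sigma h0 p * gwa_sigma h0 a) \<star> ?W)"
      by (simp add: free_alg_mult_assoc[symmetric] fa_poly_mult)
    finally show ?thesis
      by (rule nf_span_cls[OF _ fa_poly_mult_nf_word_in_nf_span]) (auto intro: carrier)
  qed
qed

lemma y_poly_nf_word_in_nf_span: "fa_y \<star> (fa_poly p \<star> fa_word (nf_word (0, n))) \<in> nf_span"
proof -
  note carrier = free_alg_mult_closed fa_word_carrier fa_poly_carrier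
  let ?P = "fa_poly p" and ?Q = "fa_poly (gwa_sigma (- h0) p)"
  have yQ: "cls (fa_y \<star> ?P) = cls (?Q \<star> fa_y)"
    using cls_poly_y[of "gwa_sigma (- h0) p"] by (simp add: gwa_sigma_inverse)
  have yP: "cls ((fa_y \<star> ?P) \<star> g) = cls ((?Q \<star> fa_y) \<star> g)" if "g \<in> carrier free_alg" for g
    by (rule cls_mult_cong[OF _ that _ that yQ refl]) (auto intro: carrier)
  show ?thesis
  proof (cases "n > 0")
    case True
    let ?W = "fa_word (nf_word (0, n - 1))"
    have "cls (fa_y \<star> (?P \<star> fa_word (nf_word (0, n)))) = cls (?Q \<star> ((fa_y \<star> fa_x) \<star> ?W))"
      using yP[of "fa_x \<star> ?W"] True
      by (simp add: free_alg_mult_assoc fa_word_mult nf_word_pos)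
    also have "\<dots> = cls (?Q \<star> (fa_poly a \<star> ?W))"
      by (rule cls_mult_cong[OF _ _ _ _ refl cls_mult_cong[OF _ _ _ _ cls_yx refl]])
         (auto intro: carrier)
    also have "\<dots> = cls (fa_poly (gwa_sigma (- h0) p * a) \<star> ?W)"
      by (simp add: free_alg_mult_assoc[symmetric] fa_poly_mult)
    finally show ?thesis
      by (rule nf_span_cls[OF _ fa_poly_mult_nf_word_in_nf_span]) (auto intro: carrier)
  next
    case False
    have "cls (fa_y \<star> (?P \<star> fa_word (nf_word (0, n)))) = cls (?Q \<star> fa_word (nf_word (0, n - 1)))"
      using yP[of "fa_word (nf_word (0, n))"] False
      by (simp add: free_alg_mult_assoc fa_word_mult nf_word_Cons_Ly)
    then show ?thesis
      by (rule nf_span_cls[OF _ fa_poly_mult_nf_word_in_nf_span]) (auto intro: carrier)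
  qed
qed

lemma fa_word_Cons_nf_word_in_nf_span: "fa_word (l # nf_word (i, n)) \<in> nf_span"
proof -
  have word: "fa_word (l # nf_word (i, n)) =
      (fa_word [l] \<star> (fa_poly (monom 1 i) \<star> fa_word (nf_word (0, n))) :: _ \<Rightarrow> 'k)"
    by (simp add: fa_word_nf_word[symmetric] fa_word_mult)
  show ?thesis
  proof (cases l)
    case Lh
    show ?thesis
      unfolding Lh nf_word_Cons_Lh fa_word_nf_word[of "Suc i" n]
      by (rule fa_poly_mult_nf_word_in_nf_span)
  next
    case Lx
    with word x_poly_nf_word_in_nf_span show ?thesis
      by simp
  next
    case Ly
    with word y_poly_nf_word_in_nf_span show ?thesis
      by simp
  qed
qed

lemma fa_word_mult_nf_in_nf_span:
  assumes K: "finite {z. K z \<noteq> 0}"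
  shows "fa_word [l] \<star> nf K \<in> nf_span"
proof -
  let ?M = "{g \<in> carrier free_alg. fa_word [l] \<star> g \<in> nf_span}"
  have "nf K \<in> ?M"
  proof (rule free_alg_induct[OF nf_carrier[OF K] nf_support])
    show "(\<lambda>u. 0) \<in> ?M"
      using I.r_null[OF fa_word_carrier] nf_in_nf_span[of "\<lambda>z. 0"] I.zero_closed by simp
  next
    fix f g assume "f \<in> ?M" "g \<in> ?M"
    then have fg: "f \<in> carrier free_alg" "g \<in> carrier free_alg"
      and "fa_word [l] \<star> f \<in> nf_span" "fa_word [l] \<star> g \<in> nf_span"
      by auto
    moreover have "f \<oplus>\<^bsub>free_alg\<^esub> g \<in> carrier free_alg"
      using fg by (rule I.a_closed)
    ultimately show "(\<lambda>u. f u + g u) \<in> ?M"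
      using I.r_distr[OF fg fa_word_carrier, of "[l]"] nf_span_add by simp
  next
    fix c f assume "f \<in> ?M"
    then show "fa_smult c f \<in> ?M"
      using nf_span_smult fa_smult_carrier by (auto simp: fa_smult_mult_right)
  next
    fix w assume "w \<in> range nf_word"
    then show "fa_word w \<in> ?M"
      using fa_word_Cons_nf_word_in_nf_span by (auto simp: fa_word_mult)
  qed
  then show ?thesis
    by simp
qed

lemma fa_word_in_nf_span: "fa_word u \<in> nf_span"
proof (induction u)
  case Nil
  have eq: "fa_word [] = nf (\<lambda>z. if z = (0, 0) then 1 else 0)"
    using fa_word_eq_nf[of "(0, 0)"] by (simp add: nf_word_def)
  have "finite {z. (if z = (0::nat, 0::int) then (1::'k) else 0) \<noteq> 0}"
    by (rule finite_subset[of _ "{(0, 0)}"]) auto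
  then show ?case
    unfolding eq by (rule nf_in_nf_span)
next
  case (Cons l u)
  then obtain K where K: "finite {z. K z \<noteq> 0}" "cls (fa_word u) = cls (nf K)"
    unfolding nf_span_def by blast
  have "cls (fa_word (l # u)) = cls (fa_word [l] \<star> nf K)"
    using cls_mult_cong[of "fa_word [l]" "fa_word u" "fa_word [l]" "nf K"] nf_carrier[OF K(1)] K(2)
    by (simp add: fa_word_mult)
  then show ?case
    using nf_span_cls fa_word_mult_nf_in_nf_span[OF K(1)] by simp
qed

lemma ex_nf_cls: "f \<in> carrier free_alg \<Longrightarrow> \<exists>K. finite {z. K z \<noteq> 0} \<and> cls f = cls (nf K)"
proof -
  assume f: "f \<in> carrier free_alg"
  have "f \<in> nf_span"
    by (rule free_alg_induct[OF f subset_UNIV])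
       (simp_all add: nf_in_nf_span[of "\<lambda>z. 0", simplified] nf_span_add nf_span_smult
         fa_word_in_nf_span)
  then show ?thesis
    unfolding nf_span_def by blast
qed

end

section \<open>Two faithful representations\<close>

lemma pcompose_linear_linear:
  "pcompose (pcompose p [:c, e:]) [:d, f:] = pcompose p [:c + e * d, e * f:]"
  by (simp add: pcompose_assoc[symmetric] pcompose_pCons algebra_simps)

lemma pCons_0_power: "[:0, t:] ^ i = monom (t ^ i) i"
proof -
  have "[:0, t:] = monom t 1"
    by (simp add: monom_Suc monom_0)
  then show ?thesis
    by (simp add: monom_power)
qed

definition delta0 :: "'k::field polyseq" where
  "delta0 = (\<lambda>n. if n = 0 then 1 else 0)"

text \<open>Position \<open>\<phi> n\<close> of the image of \<open>delta0\<close> only sees the coefficients \<open>K (_, n)\<close>, and its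
  coefficient of \<open>t\<^sup>j\<close> then isolates \<open>K (j, n)\<close>.\<close>

lemma nf_eq_zero_of_fa_act_delta0:
  fixes K :: "nat \<times> int \<Rightarrow> 'k::field"
  assumes fin: "finite {z. K z \<noteq> 0}" and "t \<noteq> 0" and c: "\<And>n. c n \<noteq> 0" and "inj \<phi>"
    and word: "\<And>i n m. word_op Op (nf_word (i, n)) delta0 m = (if m = \<phi> n then [:0, t:] ^ i * c n else 0)"
    and zero: "fa_act Op (nf K) delta0 = (\<lambda>m. 0)"
  shows "K = (\<lambda>z. 0)"
proof
  fix z :: "nat \<times> int"
  obtain j n where z: "z = (j, n)"
    by fastforce
  let ?S = "{z. K z \<noteq> 0 \<and> snd z = n}"
  let ?Q = "\<Sum>z\<in>?S. smult (K z) ([:0, t:] ^ fst z)"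
  have "fa_act Op (nf K) delta0 (\<phi> n) =
        (\<Sum>z\<in>{z. K z \<noteq> 0}. if snd z = n then smult (K z) ([:0, t:] ^ fst z * c n) else 0)"
    by (auto simp: fa_act_nf[OF fin] word \<open>inj \<phi>\<close> inj_eq intro!: sum.cong)
  also have "\<dots> = ?Q * c n"
    by (simp add: sum.inter_filter[OF fin, symmetric] sum_distrib_right conj_commute)
  finally have "?Q = 0"
    using zero c[of n] by simp
  then have "coeff ?Q j = 0"
    by simp
  moreover have "coeff ?Q j = (\<Sum>z\<in>?S. if z = (j, n) then K (j, n) * t ^ j else 0)"
    by (auto simp: coeff_sum pCons_0_power coeff_monom intro!: sum.cong)
  moreover have "finite ?S"
    using fin by simp
  ultimately show "K z = 0"
    using \<open>t \<noteq> 0\<close> z by (auto split: if_splits)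
qed

definition shifted_prod :: "'k::field poly \<Rightarrow> 'k \<Rightarrow> nat \<Rightarrow> 'k poly" where
  "shifted_prod a h0 k = (\<Prod>i<k. pcompose a [:of_nat i * h0, 1:])"

lemma shifted_prod_Suc: "shifted_prod a h0 (Suc k) = a * pcompose (shifted_prod a h0 k) [:h0, 1:]"
  unfolding shifted_prod_def prod.lessThan_Suc_shift
  by (simp add: pcompose_prod pcompose_linear_linear algebra_simps)

lemma shifted_prod_nonzero: "a \<noteq> 0 \<Longrightarrow> shifted_prod a h0 k \<noteq> 0"
  unfolding shifted_prod_def by (auto simp: pcompose_eq_0_iff)

text \<open>It is the module induced
  from \<open>k[h]\<close>: the word \<open>h\<^sup>i x\<^sup>n\<close> sends \<open>delta0\<close> to \<open>t\<^sup>i\<close> in position \<open>n\<close>.\<close>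

definition gwa_op :: "'k::field poly \<Rightarrow> 'k \<Rightarrow> gwa_letter \<Rightarrow> 'k polyseq \<Rightarrow> 'k polyseq" where
  "gwa_op a h0 l v = (case l of
      Lh \<Rightarrow> (\<lambda>n. [:0, 1:] * v n)
    | Lx \<Rightarrow> (\<lambda>n. pcompose (v (n - 1)) [:- h0, 1:])
    | Ly \<Rightarrow> (\<lambda>n. a * pcompose (v (n + 1)) [:h0, 1:]))"

text \<open>The same space as a module over \<open>A(k[H], a\<^sup>~, \<tau>)\<close>, realising \<open>H \<mapsto> h/r\<close>, \<open>X \<mapsto> x\<^sup>r\<close>,
  \<open>Y \<mapsto> y\<^sup>r\<close>.\<close>

definition inv_op :: "'k::field poly \<Rightarrow> 'k \<Rightarrow> nat \<Rightarrow> gwa_letter \<Rightarrow> 'k polyseq \<Rightarrow> 'k polyseq" where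
  "inv_op a h0 r l = (case l of
      Lh \<Rightarrow> (\<lambda>v n. [:0, inverse (of_nat r):] * v n)
    | Lx \<Rightarrow> gwa_op a h0 Lx ^^ r
    | Ly \<Rightarrow> gwa_op a h0 Ly ^^ r)"

lemma gwa_op_simps:
  "gwa_op a h0 Lh = (\<lambda>v n. [:0, 1:] * v n)"
  "gwa_op a h0 Lx v = (\<lambda>n. pcompose (v (n - 1)) [:- h0, 1:])"
  "gwa_op a h0 Ly v = (\<lambda>n. a * pcompose (v (n + 1)) [:h0, 1:])"
  by (simp_all add: gwa_op_def fun_eq_iff)

lemma inv_op_simps:
  "inv_op a h0 r Lh = (\<lambda>v n. [:0, inverse (of_nat r):] * v n)"
  "inv_op a h0 r Lx = gwa_op a h0 Lx ^^ r"
  "inv_op a h0 r Ly = gwa_op a h0 Ly ^^ r"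
  by (simp_all add: inv_op_def)

lemma polyseq_linear_gwa_op: "polyseq_linear (gwa_op a h0 l)"
  by (cases l)
     (auto simp: gwa_op_simps polyseq_linear_mult polyseq_linear_def pcompose_add pcompose_smult
        algebra_simps)

lemma polyseq_linear_inv_op: "polyseq_linear (inv_op a h0 r l)"
  by (cases l)
     (simp_all only: inv_op_simps polyseq_linear_mult polyseq_linear_funpow polyseq_linear_gwa_op)

lemma funpow_gwa_op_Lh: "(gwa_op a h0 Lh ^^ i) v = (\<lambda>n. [:0, 1:] ^ i * v n)"
  by (induction i) (auto simp: gwa_op_simps)

lemma funpow_gwa_op_Lx:
  "(gwa_op a h0 Lx ^^ k) v = (\<lambda>n. pcompose (v (n - int k)) [:- (of_nat k * h0), 1:])"
  by (induction k) (simp_all add: gwa_op_simps pcompose_linear_linear algebra_simps)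

lemma funpow_gwa_op_Ly:
  "(gwa_op a h0 Ly ^^ k) v =
   (\<lambda>n. shifted_prod a h0 k * pcompose (v (n + int k)) [:of_nat k * h0, 1:])"
  by (induction k)
     (simp_all add: shifted_prod_def[of _ _ 0] gwa_op_simps pcompose_linear_linear algebra_simps
        pcompose_mult shifted_prod_Suc)

lemma funpow_inv_op_Lh: "(inv_op a h0 r Lh ^^ i) v = (\<lambda>n. [:0, inverse (of_nat r):] ^ i * v n)"
  by (induction i) (auto simp: inv_op_simps)

lemma word_op_nf_word:
  "word_op Op (nf_word (i, n)) =
   (Op Lh ^^ i) \<circ> (if n \<ge> 0 then Op Lx ^^ nat n else Op Ly ^^ nat (- n))"
  by (simp add: nf_word_def word_op_append word_op_replicate)

definition delta0_coeff :: "'k::field poly \<Rightarrow> 'k \<Rightarrow> int \<Rightarrow> 'k poly" where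
  "delta0_coeff a h0 n = (if n \<ge> 0 then 1 else shifted_prod a h0 (nat (- n)))"

lemma word_op_gwa_op_delta0:
  "word_op (gwa_op a h0) (nf_word (i, n)) delta0 m =
   (if m = n then [:0, 1:] ^ i * delta0_coeff a h0 n else 0)"
  by (auto simp: word_op_nf_word funpow_gwa_op_Lh funpow_gwa_op_Lx funpow_gwa_op_Ly delta0_def
      delta0_coeff_def pcompose_1)

lemma word_op_inv_op_nf_word:
  fixes a :: "'k::field poly"
  assumes "r \<ge> 1"
  shows "word_op (inv_op a h0 r) (nf_word (i, n)) v =
         (\<lambda>m. smult (inverse (of_nat r) ^ i) (word_op (gwa_op a h0) (nf_word (i, int r * n)) v m))"
proof -
  have "nat (int r * n) = r * nat n" if "n \<ge> 0"
    using that by (simp add: nat_mult_distrib)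
  moreover have "nat (- (int r * n)) = r * nat (- n)" if "n < 0"
    using that nat_mult_distrib[of "int r" "- n"] by simp
  moreover have "int r * n \<ge> 0 \<longleftrightarrow> n \<ge> 0"
    using assms by (simp add: zero_le_mult_iff)
  ultimately have "word_op (inv_op a h0 r) (nf_word (0, n)) = word_op (gwa_op a h0) (nf_word (0, int r * n))"
    by (simp add: word_op_nf_word inv_op_simps funpow_mult)
  moreover have "[:0, inverse (of_nat r) :: 'k:] ^ i = smult (inverse (of_nat r) ^ i) ([:0, 1:] ^ i)"
    by (simp add: pCons_0_power smult_monom)
  ultimately show ?thesis
    using word_op_nf_word[of "inv_op a h0 r" i n] word_op_nf_word[of "inv_op a h0 r" 0 n]
      word_op_nf_word[of "gwa_op a h0" i "int r * n"] word_op_nf_word[of "gwa_op a h0" 0 "int r * n"]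
    by (simp add: funpow_inv_op_Lh funpow_gwa_op_Lh)
qed

lemma fa_act_gwa_op_rels:
  assumes "f \<in> gwa_rels a h0"
  shows "fa_act (gwa_op a h0) f v = (\<lambda>n. 0)"
proof -
  note lin = polyseq_linear_gwa_op[of a h0]
  have inverse: "pcompose (pcompose q [:- h0, 1:]) [:h0, 1:] = q"
    "pcompose (pcompose q [:h0, 1:]) [:- h0, 1:] = q" for q :: "'a poly"
    by (simp_all add: pcompose_linear_linear)
  from assms show ?thesis
    unfolding gwa_rels_def
    by (auto simp: fa_act_minus fa_act_fa_word_mult[OF lin] fa_act_mult_fa_word[OF lin] fa_act_fa_word
        fa_act_fa_poly[where Op = "gwa_op a h0" and q = "[:0, 1:]", OF gwa_op_simps(1)] free_alg_mult_closed gwa_op_simps inverse pcompose_mult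
        gwa_sigma_def algebra_simps)
qed

definition atilde :: "'k::field poly \<Rightarrow> 'k \<Rightarrow> nat \<Rightarrow> 'k poly" where
  "atilde a h0 r = (\<Prod>i<r. pcompose ((gwa_sigma (- h0) ^^ i) a) [:0, of_nat r:])"

lemma funpow_gwa_sigma: "(gwa_sigma (- h0) ^^ i) a = pcompose a [:of_nat i * h0, 1:]"
  by (induction i) (auto simp: gwa_sigma_def pcompose_linear_linear algebra_simps)

lemma pcompose_atilde:
  "(of_nat r :: 'k::field) \<noteq> 0 \<Longrightarrow>
   pcompose (atilde a h0 r) [:0, inverse (of_nat r :: 'k):] = shifted_prod a h0 r"
  unfolding atilde_def shifted_prod_def
  by (simp add: pcompose_prod funpow_gwa_sigma pcompose_linear_linear)

lemma fa_act_inv_op_rels: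
  fixes a :: "'k::field poly"
  assumes "f \<in> gwa_rels (atilde a h0 r) h0" and r: "(of_nat r :: 'k) \<noteq> 0"
  shows "fa_act (inv_op a h0 r) f v = (\<lambda>n. 0)"
proof -
  let ?R = "of_nat r :: 'k"
  let ?ri = "inverse (of_nat r) :: 'k"
  note lin = polyseq_linear_inv_op[of a h0 r]
  have rh: "?ri * (?R * h0) = h0"
    using r by (simp add: mult.assoc[symmetric])
  have F1: "pcompose (pcompose q [:0, ?ri:]) [:- (?R * h0), 1:] = pcompose q [:- h0, ?ri:]" for q
    using r by (simp add: pcompose_linear_linear rh)
  have F2: "pcompose (pcompose q [:- h0, 1:]) [:0, ?ri:] = pcompose q [:- h0, ?ri:]" for q
    by (simp add: pcompose_linear_linear)
  have F3: "pcompose (pcompose q [:- h0, ?ri:]) [:?R * h0, 1:] = pcompose q [:0, ?ri:]" for q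
    using r by (simp add: pcompose_linear_linear rh)
  have F4: "pcompose (pcompose q [:- (?R * h0), 1:]) [:?R * h0, 1:] = q"
    "pcompose (pcompose q [:?R * h0, 1:]) [:- (?R * h0), 1:] = q" for q
    by (simp_all add: pcompose_linear_linear)
  have F5: "pcompose (atilde a h0 r) [:0, ?ri:] = shifted_prod a h0 r"
    by (rule pcompose_atilde[OF r])
  have F6: "pcompose (shifted_prod a h0 r) [:- (?R * h0), 1:] = pcompose (atilde a h0 r) [:- h0, ?ri:]"
    using F1[of "atilde a h0 r"] F5 by simp
  from assms(1) show ?thesis
    unfolding gwa_rels_def
    by (auto simp: fa_act_minus fa_act_fa_word_mult[OF lin] fa_act_mult_fa_word[OF lin] fa_act_fa_word
        fa_act_fa_poly[where Op = "inv_op a h0 r" and q = "[:0, ?ri:]", OF inv_op_simps(1)] free_alg_mult_closed inv_op_simps(2,3)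
        funpow_gwa_op_Lx funpow_gwa_op_Ly gwa_sigma_def pcompose_mult F1 F2 F3 F4 F5 F6)
qed

lemma gwa_op_faithful:
  fixes a :: "'k::field poly"
  assumes "a \<noteq> 0" "finite {z. K z \<noteq> 0}" "fa_act (gwa_op a h0) (nf K) delta0 = (\<lambda>m. 0)"
  shows "K = (\<lambda>z. 0)"
  using assms
  by (intro nf_eq_zero_of_fa_act_delta0[where c = "delta0_coeff a h0" and \<phi> = id and t = 1])
     (auto simp: delta0_coeff_def shifted_prod_nonzero word_op_gwa_op_delta0)

lemma inv_op_faithful:
  fixes a :: "'k::field_char_0 poly"
  assumes "a \<noteq> 0" "r \<ge> 1" "finite {z. K z \<noteq> 0}" "fa_act (inv_op a h0 r) (nf K) delta0 = (\<lambda>m. 0)"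
  shows "K = (\<lambda>z. 0)"
proof (rule nf_eq_zero_of_fa_act_delta0)
  show "inj ((*) (int r))"
    using assms(2) by (auto simp: inj_def)
  show "word_op (inv_op a h0 r) (nf_word (i, n)) delta0 m =
        (if m = int r * n then [:0, inverse (of_nat r):] ^ i * delta0_coeff a h0 (int r * n) else 0)"
    for i n m
  proof -
    have "[:0, inverse (of_nat r) :: 'k:] ^ i = smult (inverse (of_nat r) ^ i) ([:0, 1:] ^ i)"
      by (simp add: pCons_0_power smult_monom)
    then show ?thesis
      by (simp add: word_op_inv_op_nf_word[OF assms(2)] word_op_gwa_op_delta0)
  qed
qed (use assms in \<open>auto simp: delta0_coeff_def shifted_prod_nonzero\<close>)

lemma gwa_ideal_eq_fa_act_kernel:
  fixes a :: "'k::field poly" and Op :: "gwa_letter \<Rightarrow> 'k polyseq \<Rightarrow> 'k polyseq"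
  assumes lin: "\<And>l. polyseq_linear (Op l)"
    and rels: "\<And>f v. f \<in> gwa_rels a h0 \<Longrightarrow> fa_act Op f v = (\<lambda>n. 0)"
    and faithful: "\<And>K. finite {z. K z \<noteq> 0} \<Longrightarrow> fa_act Op (nf K) delta0 = (\<lambda>m. 0) \<Longrightarrow> K = (\<lambda>z. 0)"
  shows "gwa_ideal a h0 = fa_act_kernel Op"
proof
  show sub: "gwa_ideal a h0 \<subseteq> fa_act_kernel Op"
    by (rule gwa_ideal_subset_fa_act_kernel[OF lin rels])
  show "fa_act_kernel Op \<subseteq> gwa_ideal a h0"
  proof
    fix f assume "f \<in> fa_act_kernel Op"
    then have f: "f \<in> carrier free_alg" and act: "fa_act Op f delta0 = (\<lambda>n. 0)"
      by (auto simp: fa_act_kernel_def)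
    interpret gwa_quot a h0 .
    obtain K where K: "finite {z. K z \<noteq> 0}" "cls f = cls (nf K)"
      using ex_nf_cls[OF f] by blast
    have "f \<ominus>\<^bsub>free_alg\<^esub> nf K \<in> fa_act_kernel Op"
      using K cls_eq_iff[OF f nf_carrier] sub by blast
    then have "fa_act Op (nf K) delta0 = (\<lambda>n. 0)"
      using act fa_act_minus[OF f nf_carrier[OF K(1)], of Op delta0]
      by (simp add: fa_act_kernel_def fun_eq_iff)
    then have "K = (\<lambda>z. 0)"
      by (rule faithful[OF K(1)])
    then have "f \<ominus>\<^bsub>free_alg\<^esub> \<zero>\<^bsub>free_alg\<^esub> \<in> gwa_ideal a h0"
      using K cls_eq_iff[OF f I.zero_closed] by simp
    moreover have "f \<ominus>\<^bsub>free_alg\<^esub> \<zero>\<^bsub>free_alg\<^esub> = f"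
      using free_alg_minus[OF f I.zero_closed] by simp
    ultimately show "f \<in> gwa_ideal a h0"
      by simp
  qed
qed

lemma fa_act_eq_iff_minus_mem_gwa_ideal:
  assumes "gwa_ideal a h0 = fa_act_kernel Op"
    and "f \<in> carrier free_alg" "g \<in> carrier free_alg"
  shows "fa_act Op f = fa_act Op g \<longleftrightarrow> f \<ominus>\<^bsub>free_alg\<^esub> g \<in> gwa_ideal a h0"
proof -
  interpret gwa_quot a h0 .
  have "f \<ominus>\<^bsub>free_alg\<^esub> g \<in> carrier free_alg"
    using assms(2,3) by (rule I.minus_closed)
  then show ?thesis
    unfolding assms(1) by (auto simp: fa_act_kernel_def fa_act_minus[OF assms(2,3)] fun_eq_iff)
qed

section \<open>The automorphism \<open>\<theta>\<^sub>w\<close>\<close>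

definition theta_weight :: "'k::field \<Rightarrow> gwa_letter list \<Rightarrow> 'k" where
  "theta_weight w u = w ^ count_list u Lx * inverse w ^ count_list u Ly"

lemma theta_free_eq: "theta_free w f = (\<lambda>u. theta_weight w u * f u)"
  by (simp add: theta_free_def theta_weight_def)

lemma theta_weight_append: "theta_weight w (p @ q) = theta_weight w p * theta_weight w q"
  by (simp add: theta_weight_def power_add)

lemma theta_free_mult: "theta_free w (f \<star> g) = theta_free w f \<star> theta_free w g"
proof
  fix u
  have "theta_weight w u * (\<Sum>(p, q)\<in>splits u. f p * g q) =
        (\<Sum>(p, q)\<in>splits u. theta_weight w p * f p * (theta_weight w q * g q))"
    by (auto simp: sum_distrib_left splits_def theta_weight_append mult_ac intro!: sum.cong)
  then show "theta_free w (f \<star> g) u = (theta_free w f \<star> theta_free w g) u"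
    by (simp add: theta_free_eq free_alg_mult_apply case_prod_beta)
qed

lemma theta_free_add: "theta_free w (f \<oplus>\<^bsub>free_alg\<^esub> g) = theta_free w f \<oplus>\<^bsub>free_alg\<^esub> theta_free w g"
  by (simp add: theta_free_eq algebra_simps)

lemma theta_free_carrier: "f \<in> carrier free_alg \<Longrightarrow> theta_free w f \<in> carrier free_alg"
  unfolding theta_free_eq free_alg_carrier_iff by (rule finite_subset[rotated]) auto

lemma theta_free_uminus:
  "f \<in> carrier free_alg \<Longrightarrow> theta_free w (\<ominus>\<^bsub>free_alg\<^esub> f) = \<ominus>\<^bsub>free_alg\<^esub> theta_free w f"
  by (simp add: free_alg_uminus theta_free_carrier) (simp add: theta_free_eq)

lemma theta_free_minus:
  "f \<in> carrier free_alg \<Longrightarrow> g \<in> carrier free_alg \<Longrightarrow>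
   theta_free w (f \<ominus>\<^bsub>free_alg\<^esub> g) = theta_free w f \<ominus>\<^bsub>free_alg\<^esub> theta_free w g"
  by (simp add: free_alg_minus theta_free_carrier) (simp add: theta_free_eq algebra_simps)

lemma theta_free_fa_poly: "theta_free w (fa_poly p) = fa_poly p"
proof
  fix u
  have "count_list u Lx = 0" "count_list u Ly = 0" if "set u \<subseteq> {Lh}"
    using that by (auto simp: count_list_0_iff)
  then show "theta_free w (fa_poly p) u = fa_poly p u"
    by (auto simp: theta_free_eq theta_weight_def fa_poly_apply)
qed

lemma theta_free_fa_word: "theta_free w (fa_word u) = fa_smult (theta_weight w u) (fa_word u)"
  by (auto simp: theta_free_eq fa_smult_def fa_word_def)

lemma theta_free_gwa_rels:
  fixes a :: "'k::field poly"
  assumes "w \<noteq> 0" "g \<in> gwa_rels a h0"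
  shows "\<exists>c. theta_free w g = fa_smult c g"
proof -
  note carrier = free_alg_mult_closed fa_word_carrier fa_poly_carrier
  note simps = theta_free_minus carrier theta_free_mult theta_free_fa_word theta_free_fa_poly
    fa_smult_mult_left fa_smult_mult_right fa_smult_minus theta_weight_def
  from assms(2) consider
      "g = fa_y \<star> fa_x \<ominus>\<^bsub>free_alg\<^esub> fa_poly a"
    | "g = fa_x \<star> fa_y \<ominus>\<^bsub>free_alg\<^esub> fa_poly (gwa_sigma h0 a)"
    | p where "g = fa_x \<star> fa_poly p \<ominus>\<^bsub>free_alg\<^esub> fa_poly (gwa_sigma h0 p) \<star> fa_x"
    | p where "g = fa_poly p \<star> fa_y \<ominus>\<^bsub>free_alg\<^esub> fa_y \<star> fa_poly (gwa_sigma h0 p)"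
    unfolding gwa_rels_def by blast
  then show ?thesis
  proof cases
    case 1
    then have "theta_free w g = fa_smult 1 g"
      using assms(1) by (simp add: simps)
    then show ?thesis ..
  next
    case 2
    then have "theta_free w g = fa_smult 1 g"
      using assms(1) by (simp add: simps)
    then show ?thesis ..
  next
    case 3
    then have "theta_free w g = fa_smult w g"
      by (simp add: simps)
    then show ?thesis ..
  next
    case 4
    then have "theta_free w g = fa_smult (inverse w) g"
      by (simp add: simps)
    then show ?thesis ..
  qed
qed

lemma theta_free_gwa_ideal:
  fixes a :: "'k::field poly"
  assumes "w \<noteq> 0" "f \<in> gwa_ideal a h0"
  shows "theta_free w f \<in> gwa_ideal a h0"
proof -
  interpret gwa_quot a h0 .
  let ?J = "{f \<in> carrier free_alg. theta_free w f \<in> gwa_ideal a h0}"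
  have "ideal ?J free_alg"
  proof (rule free_alg_idealI)
    fix f assume "f \<in> ?J"
    then show "\<ominus>\<^bsub>free_alg\<^esub> f \<in> ?J"
      by (auto simp: theta_free_uminus I.a_inv_closed)
  next
    fix f g assume "f \<in> ?J" "g \<in> ?J"
    then show "f \<oplus>\<^bsub>free_alg\<^esub> g \<in> ?J"
      by (auto simp only: theta_free_add mem_Collect_eq intro!: I.a_closed I.add.m_closed)
  next
    fix f x :: "gwa_letter list \<Rightarrow> 'k"
    assume "f \<in> ?J" "x \<in> carrier free_alg"
    then show "x \<star> f \<in> ?J" "f \<star> x \<in> ?J"
      by (auto simp: theta_free_mult free_alg_mult_closed theta_free_carrier
          intro: I.I_l_closed I.I_r_closed)
  qed (use additive_subgroup.zero_closed[OF I.is_additive_subgroup] in \<open>auto simp: theta_free_eq\<close>)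
  moreover have "gwa_rels a h0 \<subseteq> ?J"
  proof
    fix g assume g: "g \<in> gwa_rels a h0"
    then have "g \<in> gwa_ideal a h0"
      using I.genideal_self[OF gwa_rels_carrier] unfolding gwa_ideal_def by blast
    moreover obtain c where "theta_free w g = fa_smult c g"
      using theta_free_gwa_rels[OF assms(1) g] by blast
    ultimately show "g \<in> ?J"
      using I.I_l_closed[of g "fa_poly [:c:]"] by (simp add: fa_poly_const_mult)
  qed
  ultimately have "gwa_ideal a h0 \<subseteq> ?J"
    unfolding gwa_ideal_def by (rule I.genideal_minimal)
  then show ?thesis
    using assms(2) by blast
qed

definition nf_weight :: "'k::field \<Rightarrow> nat \<times> int \<Rightarrow> 'k" where
  "nf_weight w z = (if snd z \<ge> 0 then w ^ nat (snd z) else inverse w ^ nat (- snd z))"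

lemma theta_free_nf: "theta_free w (nf K) = nf (\<lambda>z. nf_weight w z * K z)"
proof
  fix u
  have "theta_weight w (nf_word z) = nf_weight w z" for z
    using count_list_nf_word[of "fst z" "snd z"] by (simp add: theta_weight_def nf_weight_def)
  then show "theta_free w (nf K) u = nf (\<lambda>z. nf_weight w z * K z) u"
    by (cases "u \<in> range nf_word") (auto simp: theta_free_eq nf_def inj_nf_word)
qed

lemma prim_root_nonzero: "prim_root r w \<Longrightarrow> r \<ge> 1 \<Longrightarrow> w \<noteq> 0"
  unfolding prim_root_def by (metis power_0_left not_one_le_zero zero_neq_one le_zero_eq)

lemma prim_root_power_eq_one_iff:
  assumes "prim_root r w" "r \<ge> 1"
  shows "w ^ n = 1 \<longleftrightarrow> r dvd n"
proof
  assume "w ^ n = 1"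
  moreover have "w ^ n = (w ^ r) ^ (n div r) * w ^ (n mod r)"
    by (simp add: power_mult[symmetric] power_add[symmetric])
  ultimately have "w ^ (n mod r) = 1"
    using assms(1) by (simp add: prim_root_def)
  moreover have "n mod r < r"
    using assms(2) by simp
  ultimately have "n mod r = 0"
    using assms(1) unfolding prim_root_def by (metis neq0_conv)
  then show "r dvd n"
    by auto
next
  assume "r dvd n"
  then show "w ^ n = 1"
    using assms(1) by (auto simp: prim_root_def power_mult)
qed

lemma nf_weight_eq_one_iff:
  assumes "prim_root r w" "r \<ge> 1"
  shows "nf_weight w z = 1 \<longleftrightarrow> int r dvd snd z"
proof (cases "snd z \<ge> 0")
  case True
  then have "int r dvd snd z \<longleftrightarrow> r dvd nat (snd z)"
    by (metis int_dvd_int_iff nat_0_le)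
  then show ?thesis
    using True prim_root_power_eq_one_iff[OF assms] by (simp add: nf_weight_def)
next
  case False
  have "int r dvd snd z \<longleftrightarrow> r dvd nat (- snd z)"
    using False by (metis dvd_minus_iff int_dvd_int_iff nat_0_le neg_0_le_iff_le nle_le)
  moreover have "inverse w ^ m = 1 \<longleftrightarrow> w ^ m = 1" for m
    by (metis inverse_1 inverse_inverse_eq power_inverse)
  ultimately show ?thesis
    using False prim_root_power_eq_one_iff[OF assms] by (simp add: nf_weight_def)
qed

context gwa_quot
begin

lemma gwa_theta_cls:
  assumes "w \<noteq> 0" "g \<in> carrier free_alg"
  shows "gwa_theta a h0 w (cls g) = cls (theta_free w g)"
proof -
  let ?g = "SOME f. f \<in> cls g"
  have g: "?g \<in> carrier free_alg" "cls ?g = cls g"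
    using rep_cls[OF cls_carrier[OF assms(2)]] by auto
  then have "theta_free w (?g \<ominus>\<^bsub>free_alg\<^esub> g) \<in> gwa_ideal a h0"
    using cls_eq_iff[OF g(1) assms(2)] theta_free_gwa_ideal[OF assms(1)] by blast
  then have "cls (theta_free w ?g) = cls (theta_free w g)"
    using cls_eq_iff[OF theta_free_carrier[OF g(1)] theta_free_carrier[OF assms(2)]]
    by (simp add: theta_free_minus[OF g(1) assms(2)])
  then show ?thesis
    by (simp add: gwa_theta_def)
qed

end

section \<open>Quotient rings with a common faithful image\<close>

lemma (in ring) Quot_carrier_rep:
  assumes "ideal I R" "C \<in> carrier (R Quot I)"
  shows "(SOME f. f \<in> C) \<in> carrier R" "I +> (SOME f. f \<in> C) = C"
proof -
  interpret ideal I R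
    by (rule assms(1))
  obtain g where g: "g \<in> carrier R" "C = I +> g"
    using assms(2) unfolding FactRing_def A_RCOSETS_def RCOSETS_def a_r_coset_def by auto
  then have "g \<in> C"
    using a_rcos_self by simp
  then have some: "(SOME f. f \<in> C) \<in> C"
    by (rule someI[of "\<lambda>f. f \<in> C"])
  then show "(SOME f. f \<in> C) \<in> carrier R"
    using g a_rcosets_carrier a_rcosetsI[OF a_subset] by (metis subsetD)
  then show "I +> (SOME f. f \<in> C) = C"
    using some g a_repr_independence' by metis
qed

text \<open>Given maps \<open>\<alpha>\<close>, \<open>\<beta>\<close> on \<open>R\<close> that induce injections of \<open>R/I\<close> and \<open>R/J\<close> into a common
  target, send a class of \<open>R/I\<close> to the class of \<open>R/J\<close> with the same image.\<close>

definition quot_transfer ::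
  "('a, 'm) ring_scheme \<Rightarrow> 'a set \<Rightarrow> ('a \<Rightarrow> 'e) \<Rightarrow> ('a \<Rightarrow> 'e) \<Rightarrow> 'a set \<Rightarrow> 'a set" where
  "quot_transfer R J \<alpha> \<beta> C = J +>\<^bsub>R\<^esub> (SOME g. g \<in> carrier R \<and> \<beta> g = \<alpha> (SOME f. f \<in> C))"

locale faithful_quotients = ring R for R (structure) +
  fixes I J :: "'a set" and S :: "'a set set"
    and \<alpha> \<beta> :: "'a \<Rightarrow> 'e" and mulE addE :: "'e \<Rightarrow> 'e \<Rightarrow> 'e"
  assumes ideal_I: "ideal I R" and ideal_J: "ideal J R"
    and \<alpha>_eq_iff: "\<And>f g. f \<in> carrier R \<Longrightarrow> g \<in> carrier R \<Longrightarrow> \<alpha> f = \<alpha> g \<longleftrightarrow> f \<ominus> g \<in> I"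
    and \<beta>_eq_iff: "\<And>f g. f \<in> carrier R \<Longrightarrow> g \<in> carrier R \<Longrightarrow> \<beta> f = \<beta> g \<longleftrightarrow> f \<ominus> g \<in> J"
    and \<alpha>_mult: "\<And>f g. f \<in> carrier R \<Longrightarrow> g \<in> carrier R \<Longrightarrow> \<alpha> (f \<otimes> g) = mulE (\<alpha> f) (\<alpha> g)"
    and \<beta>_mult: "\<And>f g. f \<in> carrier R \<Longrightarrow> g \<in> carrier R \<Longrightarrow> \<beta> (f \<otimes> g) = mulE (\<beta> f) (\<beta> g)"
    and \<alpha>_add: "\<And>f g. f \<in> carrier R \<Longrightarrow> g \<in> carrier R \<Longrightarrow> \<alpha> (f \<oplus> g) = addE (\<alpha> f) (\<alpha> g)"
    and \<beta>_add: "\<And>f g. f \<in> carrier R \<Longrightarrow> g \<in> carrier R \<Longrightarrow> \<beta> (f \<oplus> g) = addE (\<beta> f) (\<beta> g)"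
    and \<alpha>_\<beta>_one: "\<alpha> \<one> = \<beta> \<one>"
    and S_subset: "S \<subseteq> carrier (R Quot I)"
    and image_eq: "\<beta> ` carrier R = \<alpha> ` {f \<in> carrier R. I +> f \<in> S}"
begin

abbreviation transfer :: "'a set \<Rightarrow> 'a set" where
  "transfer \<equiv> quot_transfer R J \<alpha> \<beta>"

lemma transfer_a_r_coset:
  assumes f: "f \<in> carrier R" and g: "g \<in> carrier R" and "\<beta> g = \<alpha> f"
  shows "transfer (I +> f) = J +> g"
proof -
  let ?f = "SOME f'. f' \<in> I +> f"
  have "I +> f \<in> carrier (R Quot I)"
    using f a_rcosetsI[of I f] ideal.Icarr[OF ideal_I] by (auto simp: FactRing_def)
  then have "?f \<in> carrier R" "I +> ?f = I +> f"
    using Quot_carrier_rep[OF ideal_I] by auto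
  then have "\<beta> g = \<alpha> ?f"
    using \<alpha>_eq_iff f quotient_eq_iff_same_a_r_cos[OF ideal_I] \<open>\<beta> g = \<alpha> f\<close> by metis
  then have "(SOME g'. g' \<in> carrier R \<and> \<beta> g' = \<alpha> ?f) \<in> carrier R \<and>
             \<beta> (SOME g'. g' \<in> carrier R \<and> \<beta> g' = \<alpha> ?f) = \<beta> g"
    using someI[of "\<lambda>g'. g' \<in> carrier R \<and> \<beta> g' = \<alpha> ?f" g] g by auto
  then show ?thesis
    unfolding quot_transfer_def using \<beta>_eq_iff g quotient_eq_iff_same_a_r_cos[OF ideal_J] by metis
qed

lemma a_r_coset_J_carrier: "g \<in> carrier R \<Longrightarrow> J +> g \<in> carrier (R Quot J)"
  using a_rcosetsI[of J g] ideal.Icarr[OF ideal_J] by (auto simp: FactRing_def)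

lemma S_elemE:
  assumes "x \<in> S"
  obtains f g where "f \<in> carrier R" "g \<in> carrier R" "x = I +> f" "\<beta> g = \<alpha> f" "transfer x = J +> g"
proof -
  let ?f = "SOME f. f \<in> x"
  have f: "?f \<in> carrier R" "I +> ?f = x"
    using Quot_carrier_rep[OF ideal_I] S_subset assms by auto
  then have "\<alpha> ?f \<in> \<beta> ` carrier R"
    using image_eq assms by auto
  then obtain g where g: "g \<in> carrier R" "\<beta> g = \<alpha> ?f"
    by (metis imageE)
  then have "transfer x = J +> g"
    using transfer_a_r_coset[OF f(1) g(1)] f(2) by simp
  then show ?thesis
    using f g that by blast
qed

lemma transfer_carrier: "x \<in> S \<Longrightarrow> transfer x \<in> carrier (R Quot J)"
  by (erule S_elemE) (simp add: a_r_coset_J_carrier)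

lemma transfer_mult:
  assumes "x \<in> S" "y \<in> S"
  shows "transfer (x \<otimes>\<^bsub>R Quot I\<^esub> y) = transfer x \<otimes>\<^bsub>R Quot J\<^esub> transfer y"
proof -
  obtain f1 g1 where "f1 \<in> carrier R" "g1 \<in> carrier R" "x = I +> f1" "\<beta> g1 = \<alpha> f1"
      "transfer x = J +> g1"
    using S_elemE[OF assms(1)] by blast
  moreover obtain f2 g2 where "f2 \<in> carrier R" "g2 \<in> carrier R" "y = I +> f2" "\<beta> g2 = \<alpha> f2"
      "transfer y = J +> g2"
    using S_elemE[OF assms(2)] by blast
  ultimately show ?thesis
    using transfer_a_r_coset[of "f1 \<otimes> f2" "g1 \<otimes> g2"] \<alpha>_mult \<beta>_mult
    by (simp add: FactRing_def ideal.rcoset_mult_add[OF ideal_I] ideal.rcoset_mult_add[OF ideal_J])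
qed

lemma transfer_add:
  assumes "x \<in> S" "y \<in> S"
  shows "transfer (x \<oplus>\<^bsub>R Quot I\<^esub> y) = transfer x \<oplus>\<^bsub>R Quot J\<^esub> transfer y"
proof -
  obtain f1 g1 where "f1 \<in> carrier R" "g1 \<in> carrier R" "x = I +> f1" "\<beta> g1 = \<alpha> f1"
      "transfer x = J +> g1"
    using S_elemE[OF assms(1)] by blast
  moreover obtain f2 g2 where "f2 \<in> carrier R" "g2 \<in> carrier R" "y = I +> f2" "\<beta> g2 = \<alpha> f2"
      "transfer y = J +> g2"
    using S_elemE[OF assms(2)] by blast
  ultimately show ?thesis
    using transfer_a_r_coset[of "f1 \<oplus> f2" "g1 \<oplus> g2"] \<alpha>_add \<beta>_add
    by (simp add: FactRing_def ideal.a_rcos_sum[OF ideal_I] ideal.a_rcos_sum[OF ideal_J])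
qed

lemma inj_on_transfer: "inj_on transfer S"
proof (rule inj_onI)
  fix x y assume "x \<in> S" "y \<in> S" and eq: "transfer x = transfer y"
  obtain f1 g1 where f1: "f1 \<in> carrier R" "g1 \<in> carrier R" "x = I +> f1" "\<beta> g1 = \<alpha> f1"
      "transfer x = J +> g1"
    using S_elemE[OF \<open>x \<in> S\<close>] by blast
  obtain f2 g2 where f2: "f2 \<in> carrier R" "g2 \<in> carrier R" "y = I +> f2" "\<beta> g2 = \<alpha> f2"
      "transfer y = J +> g2"
    using S_elemE[OF \<open>y \<in> S\<close>] by blast
  have "J +> g1 = J +> g2"
    using eq f1(5) f2(5) by simp
  then have "\<alpha> f1 = \<alpha> f2"
    using \<beta>_eq_iff[OF f1(2) f2(2)] quotient_eq_iff_same_a_r_cos[OF ideal_J f1(2) f2(2)] f1(4) f2(4)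
    by simp
  then show "x = y"
    using \<alpha>_eq_iff[OF f1(1) f2(1)] quotient_eq_iff_same_a_r_cos[OF ideal_I f1(1) f2(1)] f1(3) f2(3)
    by simp
qed

lemma transfer_image: "transfer ` S = carrier (R Quot J)"
proof
  show "transfer ` S \<subseteq> carrier (R Quot J)"
    using transfer_carrier by blast
  show "carrier (R Quot J) \<subseteq> transfer ` S"
  proof
    fix D assume D: "D \<in> carrier (R Quot J)"
    let ?g = "SOME g. g \<in> D"
    have g: "?g \<in> carrier R" "J +> ?g = D"
      using Quot_carrier_rep[OF ideal_J D] by auto
    then have "\<beta> ?g \<in> \<alpha> ` {f \<in> carrier R. I +> f \<in> S}"
      using image_eq by blast
    then obtain f where f: "f \<in> carrier R" "I +> f \<in> S" "\<beta> ?g = \<alpha> f"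
      by blast
    then have "D = transfer (I +> f)"
      using g transfer_a_r_coset[of f ?g] by simp
    then show "D \<in> transfer ` S"
      using f(2) by (rule image_eqI)
  qed
qed

lemma transfer_ring_iso: "transfer \<in> ring_iso ((R Quot I)\<lparr>carrier := S\<rparr>) (R Quot J)"
proof (rule ring_iso_memI)
  show "transfer \<one>\<^bsub>(R Quot I)\<lparr>carrier := S\<rparr>\<^esub> = \<one>\<^bsub>R Quot J\<^esub>"
    using transfer_a_r_coset[OF one_closed one_closed \<alpha>_\<beta>_one[symmetric]] by (simp add: FactRing_def)
  show "bij_betw transfer (carrier ((R Quot I)\<lparr>carrier := S\<rparr>)) (carrier (R Quot J))"
    using inj_on_transfer transfer_image by (simp add: bij_betw_def)
qed (simp_all add: transfer_carrier transfer_mult transfer_add)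

end

section \<open>The invariant subalgebra\<close>

lemma gwa_ideal_eq_kernel_gwa_op:
  fixes a :: "'k::field poly"
  assumes "a \<noteq> 0"
  shows "gwa_ideal a h0 = fa_act_kernel (gwa_op a h0)"
  by (intro gwa_ideal_eq_fa_act_kernel[OF polyseq_linear_gwa_op fa_act_gwa_op_rels])
     (auto intro: gwa_op_faithful[OF assms])

lemma gwa_ideal_atilde_eq_kernel_inv_op:
  fixes a :: "'k::field_char_0 poly"
  assumes "a \<noteq> 0" "r \<ge> 1"
  shows "gwa_ideal (atilde a h0 r) h0 = fa_act_kernel (inv_op a h0 r)"
  using assms
  by (intro gwa_ideal_eq_fa_act_kernel[OF polyseq_linear_inv_op fa_act_inv_op_rels])
     (auto intro: inv_op_faithful)

lemma fa_act_gwa_op_eq_iff: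
  fixes a :: "'k::field poly"
  assumes "a \<noteq> 0" "f \<in> carrier free_alg" "g \<in> carrier free_alg"
  shows "fa_act (gwa_op a h0) f = fa_act (gwa_op a h0) g \<longleftrightarrow> f \<ominus>\<^bsub>free_alg\<^esub> g \<in> gwa_ideal a h0"
  by (rule fa_act_eq_iff_minus_mem_gwa_ideal[OF gwa_ideal_eq_kernel_gwa_op[OF assms(1)] assms(2,3)])

lemma fa_act_inv_op_eq_iff:
  fixes a :: "'k::field_char_0 poly"
  assumes "a \<noteq> 0" "r \<ge> 1" "f \<in> carrier free_alg" "g \<in> carrier free_alg"
  shows "fa_act (inv_op a h0 r) f = fa_act (inv_op a h0 r) g \<longleftrightarrow>
         f \<ominus>\<^bsub>free_alg\<^esub> g \<in> gwa_ideal (atilde a h0 r) h0"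
  by (rule fa_act_eq_iff_minus_mem_gwa_ideal[OF gwa_ideal_atilde_eq_kernel_inv_op[OF assms(1,2)] assms(3,4)])

lemma gwa_class_nf_eq_iff:
  fixes a :: "'k::field poly"
  assumes "a \<noteq> 0" "finite {z. K1 z \<noteq> 0}" "finite {z. K2 z \<noteq> 0}"
  shows "gwa_class a h0 (nf K1) = gwa_class a h0 (nf K2) \<longleftrightarrow> K1 = K2"
proof
  interpret gwa_quot a h0 .
  assume "cls (nf K1) = cls (nf K2)"
  then have "nf (\<lambda>z. K1 z - K2 z) \<in> fa_act_kernel (gwa_op a h0)"
    using cls_eq_iff[OF nf_carrier[OF assms(2)] nf_carrier[OF assms(3)]]
    by (simp add: nf_diff[OF assms(2,3)] gwa_ideal_eq_kernel_gwa_op[OF assms(1)])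
  moreover have "finite {z. K1 z - K2 z \<noteq> 0}"
    by (rule finite_subset[of _ "{z. K1 z \<noteq> 0} \<union> {z. K2 z \<noteq> 0}"]) (use assms in auto)
  ultimately have "(\<lambda>z. K1 z - K2 z) = (\<lambda>z. 0)"
    by (intro gwa_op_faithful[OF assms(1)]) (auto simp: fa_act_kernel_def)
  then show "K1 = K2"
    by (simp add: fun_eq_iff)
qed simp

text \<open>\<open>\<theta>\<^sub>w\<close> multiplies \<open>h\<^sup>i x\<^sup>n\<close> by \<open>w\<^sup>n\<close>.\<close>

lemma gwa_class_nf_mem_invariants_iff:
  fixes a :: "'k::field poly"
  assumes "a \<noteq> 0" "prim_root r w" "r \<ge> 1" and K: "finite {z. K z \<noteq> 0}"
  shows "gwa_class a h0 (nf K) \<in> gwa_invariants a h0 w r \<longleftrightarrow> (\<forall>z. K z \<noteq> 0 \<longrightarrow> int r dvd snd z)"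
proof -
  interpret gwa_quot a h0 .
  have w: "w \<noteq> 0"
    using prim_root_nonzero[OF assms(2,3)] .
  have "finite {z. nf_weight w z * K z \<noteq> 0}"
    by (rule finite_subset[OF _ K]) auto
  then have "gwa_theta a h0 w (cls (nf K)) = cls (nf K) \<longleftrightarrow> (\<lambda>z. nf_weight w z * K z) = K"
    using gwa_class_nf_eq_iff[OF assms(1) _ K]
    by (simp add: gwa_theta_cls[OF w nf_carrier[OF K]] theta_free_nf)
  also have "\<dots> \<longleftrightarrow> (\<forall>z. K z \<noteq> 0 \<longrightarrow> int r dvd snd z)"
    using nf_weight_eq_one_iff[OF assms(2,3)] by (auto simp: fun_eq_iff)
  finally have fixed: "gwa_theta a h0 w (cls (nf K)) = cls (nf K) \<longleftrightarrow> (\<forall>z. K z \<noteq> 0 \<longrightarrow> int r dvd snd z)" .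
  show ?thesis
  proof
    assume "cls (nf K) \<in> gwa_invariants a h0 w r"
    then have "r > 1 \<Longrightarrow> (gwa_theta a h0 w ^^ 1) (cls (nf K)) = cls (nf K)"
      unfolding gwa_invariants_def by blast
    then have "r > 1 \<Longrightarrow> gwa_theta a h0 w (cls (nf K)) = cls (nf K)"
      by simp
    then show "\<forall>z. K z \<noteq> 0 \<longrightarrow> int r dvd snd z"
      using fixed assms(3) by (cases "r = 1") auto
  next
    assume "\<forall>z. K z \<noteq> 0 \<longrightarrow> int r dvd snd z"
    then have "gwa_theta a h0 w (cls (nf K)) = cls (nf K)"
      using fixed by blast
    then have "(gwa_theta a h0 w ^^ j) (cls (nf K)) = cls (nf K)" for j
      by (induction j) simp_all
    then show "cls (nf K) \<in> gwa_invariants a h0 w r"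
      unfolding gwa_invariants_def using cls_carrier[OF nf_carrier[OF K]] by blast
  qed
qed

text \<open>The word \<open>H\<^sup>i X\<^sup>n\<close> acts through \<open>inv_op\<close> as \<open>r\<^sup>-\<^sup>i h\<^sup>i x\<^sup>r\<^sup>n\<close>, hence the normal form with
  coefficients \<open>K (i, r n) r\<^sup>i\<close> acts as the normal form \<open>nf K\<close> through \<open>gwa_op\<close>.\<close>

definition nf_rescale :: "nat \<Rightarrow> (nat \<times> int \<Rightarrow> 'k::field) \<Rightarrow> nat \<times> int \<Rightarrow> 'k" where
  "nf_rescale r K z = K (fst z, int r * snd z) * of_nat r ^ fst z"

lemma nf_rescale_support_eq:
  fixes K :: "nat \<times> int \<Rightarrow> 'k::field_char_0"
  assumes "r \<ge> 1"
  shows "{z. nf_rescale r K z \<noteq> 0} = (\<lambda>z. (fst z, int r * snd z)) -` {z. K z \<noteq> 0}"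
  using assms by (auto simp: nf_rescale_def)

lemma finite_nf_rescale_support:
  fixes K :: "nat \<times> int \<Rightarrow> 'k::field_char_0"
  assumes "r \<ge> 1" "finite {z. K z \<noteq> 0}"
  shows "finite {z. nf_rescale r K z \<noteq> 0}"
  unfolding nf_rescale_support_eq[OF assms(1)]
  by (rule finite_vimageI[OF assms(2)]) (use assms(1) in \<open>auto simp: inj_def\<close>)

lemma image_nf_rescale_support:
  fixes K :: "nat \<times> int \<Rightarrow> 'k::field_char_0"
  assumes "r \<ge> 1" and dvd: "\<And>z. K z \<noteq> 0 \<Longrightarrow> int r dvd snd z"
  shows "(\<lambda>z. (fst z, int r * snd z)) ` {z. nf_rescale r K z \<noteq> 0} = {z. K z \<noteq> 0}"
proof
  show "(\<lambda>z. (fst z, int r * snd z)) ` {z. nf_rescale r K z \<noteq> 0} \<subseteq> {z. K z \<noteq> 0}"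
    unfolding nf_rescale_support_eq[OF assms(1)] by auto
  show "{z. K z \<noteq> 0} \<subseteq> (\<lambda>z. (fst z, int r * snd z)) ` {z. nf_rescale r K z \<noteq> 0}"
  proof
    fix z assume z: "z \<in> {z. K z \<noteq> 0}"
    then have "int r dvd snd z"
      using dvd by simp
    then obtain k where k: "snd z = int r * k"
      by (rule dvdE)
    then have z_eq: "z = (fst (fst z, k), int r * snd (fst z, k))"
      by (simp add: prod_eq_iff)
    then have "(fst z, k) \<in> {z. nf_rescale r K z \<noteq> 0}"
      using z unfolding nf_rescale_support_eq[OF assms(1)] by simp
    with z_eq show "z \<in> (\<lambda>z. (fst z, int r * snd z)) ` {z. nf_rescale r K z \<noteq> 0}"
      by blast
  qed
qed

lemma fa_act_inv_op_nf_rescale: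
  fixes a :: "'k::field_char_0 poly"
  assumes r: "r \<ge> 1" and K: "finite {z. K z \<noteq> 0}" and dvd: "\<And>z. K z \<noteq> 0 \<Longrightarrow> int r dvd snd z"
  shows "fa_act (inv_op a h0 r) (nf (nf_rescale r K)) = fa_act (gwa_op a h0) (nf K)"
proof (intro ext)
  fix v m
  let ?g = "\<lambda>z::nat \<times> int. (fst z, int r * snd z)"
  let ?S = "{z. nf_rescale r K z \<noteq> 0}"
  have summand: "smult (nf_rescale r K z) (word_op (inv_op a h0 r) (nf_word z) v m) =
                 smult (K (?g z)) (word_op (gwa_op a h0) (nf_word (?g z)) v m)" for z
  proof -
    have "of_nat r ^ fst z * inverse (of_nat r) ^ fst z = (1::'k)"
      using r by (simp add: power_mult_distrib[symmetric])
    then show ?thesis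
      using word_op_inv_op_nf_word[OF r, of a h0 "fst z" "snd z"]
      by (simp add: nf_rescale_def mult.assoc)
  qed
  have "inj_on ?g ?S"
    using r by (auto simp: inj_on_def prod_eq_iff)
  then have "fa_act (inv_op a h0 r) (nf (nf_rescale r K)) v m =
             (\<Sum>y\<in>?g ` ?S. smult (K y) (word_op (gwa_op a h0) (nf_word y) v m))"
    by (simp add: fa_act_nf[OF finite_nf_rescale_support[OF r K]] summand sum.reindex)
  also have "\<dots> = fa_act (gwa_op a h0) (nf K) v m"
    by (simp add: fa_act_nf[OF K] image_nf_rescale_support[OF r dvd])
  finally show "fa_act (inv_op a h0 r) (nf (nf_rescale r K)) v m = fa_act (gwa_op a h0) (nf K) v m" .
qed

lemma ex_nf_rescale_eq:
  fixes K :: "nat \<times> int \<Rightarrow> 'k::field_char_0"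
  assumes r: "r \<ge> 1" and K: "finite {z. K z \<noteq> 0}"
  obtains K' where "finite {z. K' z \<noteq> 0}" "\<And>z. K' z \<noteq> 0 \<Longrightarrow> int r dvd snd z" "nf_rescale r K' = K"
proof
  define K' where "K' z = (if int r dvd snd z then K (fst z, snd z div int r) * inverse (of_nat r) ^ fst z else 0)"
    for z :: "nat \<times> int"
  have "{z. K' z \<noteq> 0} \<subseteq> (\<lambda>z. (fst z, int r * snd z)) ` {z. K z \<noteq> 0}"
  proof
    fix z assume "z \<in> {z. K' z \<noteq> 0}"
    then have "int r dvd snd z" "K (fst z, snd z div int r) \<noteq> 0"
      by (auto simp: K'_def split: if_splits)
    then show "z \<in> (\<lambda>z. (fst z, int r * snd z)) ` {z. K z \<noteq> 0}"
      by (intro image_eqI[of _ _ "(fst z, snd z div int r)"]) auto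
  qed
  then show "finite {z. K' z \<noteq> 0}"
    using K by (rule finite_subset[OF _ finite_imageI])
  show "int r dvd snd z" if "K' z \<noteq> 0" for z
    using that by (auto simp: K'_def split: if_splits)
  have "(of_nat r :: 'k) \<noteq> 0"
    using r by simp
  then show "nf_rescale r K' = K"
    using r by (auto simp: fun_eq_iff nf_rescale_def K'_def power_mult_distrib[symmetric])
qed

lemma fa_act_inv_op_eq_invariant:
  fixes a :: "'k::field_char_0 poly"
  assumes a: "a \<noteq> 0" and r: "r \<ge> 1" and w: "prim_root r w" and g: "g \<in> carrier free_alg"
  obtains f where "f \<in> carrier free_alg" "gwa_class a h0 f \<in> gwa_invariants a h0 w r"
    "fa_act (inv_op a h0 r) g = fa_act (gwa_op a h0) f"
proof -
  interpret B: gwa_quot "atilde a h0 r" h0 .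
  obtain K where K: "finite {z. K z \<noteq> 0}" "B.cls g = B.cls (nf K)"
    using B.ex_nf_cls[OF g] by blast
  obtain K' where K': "finite {z. K' z \<noteq> 0}" "\<And>z. K' z \<noteq> 0 \<Longrightarrow> int r dvd snd z" "nf_rescale r K' = K"
    using ex_nf_rescale_eq[OF r K(1)] by blast
  have "fa_act (inv_op a h0 r) g = fa_act (inv_op a h0 r) (nf K)"
    using fa_act_inv_op_eq_iff[OF a r g nf_carrier[OF K(1)]] B.cls_eq_iff[OF g nf_carrier[OF K(1)]] K(2)
    by simp
  also have "\<dots> = fa_act (gwa_op a h0) (nf K')"
    using fa_act_inv_op_nf_rescale[OF r K'(1,2)] K'(3) by simp
  finally show ?thesis
    using that nf_carrier[OF K'(1)] gwa_class_nf_mem_invariants_iff[OF a w r K'(1)] K'(2) by blast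
qed

lemma fa_act_invariant_eq_inv_op:
  fixes a :: "'k::field_char_0 poly"
  assumes a: "a \<noteq> 0" and r: "r \<ge> 1" and w: "prim_root r w"
    and f: "f \<in> carrier free_alg" "gwa_class a h0 f \<in> gwa_invariants a h0 w r"
  obtains g where "g \<in> carrier free_alg" "fa_act (gwa_op a h0) f = fa_act (inv_op a h0 r) g"
proof -
  interpret A: gwa_quot a h0 .
  obtain K where K: "finite {z. K z \<noteq> 0}" "A.cls f = A.cls (nf K)"
    using A.ex_nf_cls[OF f(1)] by blast
  then have "A.cls (nf K) \<in> gwa_invariants a h0 w r"
    using f(2) by simp
  then have "\<And>z. K z \<noteq> 0 \<Longrightarrow> int r dvd snd z"
    using gwa_class_nf_mem_invariants_iff[OF a w r K(1)] by blast
  moreover have "fa_act (gwa_op a h0) f = fa_act (gwa_op a h0) (nf K)"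
    using fa_act_gwa_op_eq_iff[OF a f(1) nf_carrier[OF K(1)]] A.cls_eq_iff[OF f(1) nf_carrier[OF K(1)]] K(2)
    by simp
  ultimately show ?thesis
    using that nf_carrier[OF finite_nf_rescale_support[OF r K(1)]] fa_act_inv_op_nf_rescale[OF r K(1)]
    by metis
qed

lemma fa_act_inv_op_image:
  fixes a :: "'k::field_char_0 poly"
  assumes "a \<noteq> 0" "r \<ge> 1" "prim_root r w"
  shows "fa_act (inv_op a h0 r) ` carrier free_alg =
         fa_act (gwa_op a h0) ` {f \<in> carrier free_alg. gwa_class a h0 f \<in> gwa_invariants a h0 w r}"
proof (intro equalityI subsetI)
  fix F assume "F \<in> fa_act (inv_op a h0 r) ` carrier free_alg"
  then obtain g where g: "g \<in> carrier free_alg" "F = fa_act (inv_op a h0 r) g"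
    by blast
  obtain f where "f \<in> carrier free_alg" "gwa_class a h0 f \<in> gwa_invariants a h0 w r"
      "fa_act (inv_op a h0 r) g = fa_act (gwa_op a h0) f"
    by (rule fa_act_inv_op_eq_invariant[OF assms g(1)])
  then show "F \<in> fa_act (gwa_op a h0) ` {f \<in> carrier free_alg. gwa_class a h0 f \<in> gwa_invariants a h0 w r}"
    using g(2) by blast
next
  fix F assume "F \<in> fa_act (gwa_op a h0) ` {f \<in> carrier free_alg. gwa_class a h0 f \<in> gwa_invariants a h0 w r}"
  then obtain f where f: "f \<in> carrier free_alg" "gwa_class a h0 f \<in> gwa_invariants a h0 w r"
      "F = fa_act (gwa_op a h0) f"
    by blast
  obtain g where "g \<in> carrier free_alg" "fa_act (gwa_op a h0) f = fa_act (inv_op a h0 r) g"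
    by (rule fa_act_invariant_eq_inv_op[OF assms f(1,2)])
  then show "F \<in> fa_act (inv_op a h0 r) ` carrier free_alg"
    using f(3) by blast
qed

definition gwa_inv_iso ::
  "'k::field poly \<Rightarrow> 'k \<Rightarrow> nat \<Rightarrow> (gwa_letter list \<Rightarrow> 'k) set \<Rightarrow> (gwa_letter list \<Rightarrow> 'k) set" where
  "gwa_inv_iso a h0 r =
     quot_transfer free_alg (gwa_ideal (atilde a h0 r) h0) (fa_act (gwa_op a h0)) (fa_act (inv_op a h0 r))"

lemma faithful_quotients_gwa_invariants:
  fixes a :: "'k::field_char_0 poly"
  assumes a: "a \<noteq> 0" and r: "r \<ge> 1" and w: "prim_root r w"
  shows "faithful_quotients free_alg (gwa_ideal a h0) (gwa_ideal (atilde a h0 r) h0)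
           (gwa_invariants a h0 w r) (fa_act (gwa_op a h0)) (fa_act (inv_op a h0 r))
           (\<circ>) (\<lambda>F G v n. F v n + G v n)"
proof (intro faithful_quotients.intro faithful_quotients_axioms.intro ring_free_alg ideal_gwa_ideal)
  show "gwa_invariants a h0 w r \<subseteq> carrier (free_alg Quot gwa_ideal a h0)"
    by (auto simp: gwa_invariants_def gwa_def)
  show "fa_act (inv_op a h0 r) ` carrier free_alg =
        fa_act (gwa_op a h0) ` {f \<in> carrier free_alg. gwa_ideal a h0 +>\<^bsub>free_alg\<^esub> f \<in> gwa_invariants a h0 w r}"
    using fa_act_inv_op_image[OF a r w] by (simp add: gwa_class_def)
  show "fa_act (gwa_op a h0) \<one>\<^bsub>free_alg\<^esub> = fa_act (inv_op a h0 r) \<one>\<^bsub>free_alg\<^esub>"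
    by (simp only: fa_act_one)
qed (simp_all only: fa_act_gwa_op_eq_iff[OF a] fa_act_inv_op_eq_iff[OF a r] fa_act_add_fun
       fa_act_mult_comp[OF polyseq_linear_gwa_op] fa_act_mult_comp[OF polyseq_linear_inv_op])

lemma gwa_inv_iso_ring_iso:
  fixes a :: "'k::field_char_0 poly"
  assumes "a \<noteq> 0" "r \<ge> 1" "prim_root r w"
  shows "gwa_inv_iso a h0 r \<in> ring_iso (gwa_inv_alg a h0 w r) (gwa (atilde a h0 r) h0)"
  using faithful_quotients.transfer_ring_iso[OF faithful_quotients_gwa_invariants[OF assms]]
  by (simp add: gwa_inv_iso_def gwa_inv_alg_def gwa_def)

lemma gwa_inv_iso_scalar:
  fixes a :: "'k::field_char_0 poly" and w :: 'k
  assumes "a \<noteq> 0" "r \<ge> 1" "prim_root r w"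
  shows "gwa_inv_iso a h0 r (gwa_scalar a h0 c) = gwa_scalar (atilde a h0 r) h0 c"
  unfolding gwa_inv_iso_def gwa_scalar_def gwa_class_def
proof (rule faithful_quotients.transfer_a_r_coset[OF faithful_quotients_gwa_invariants[OF assms]])
  show "fa_act (inv_op a h0 r) (fa_poly [:c:]) = fa_act (gwa_op a h0) (fa_poly [:c:])"
    by (rule ext)
       (simp add: fa_act_fa_poly[where Op = "gwa_op a h0" and q = "[:0, 1:]", OF gwa_op_simps(1)]
        fa_act_fa_poly[where Op = "inv_op a h0 r" and q = "[:0, inverse (of_nat r):]", OF inv_op_simps(1)])
qed simp_all

theorem lemma4p1:
  fixes a :: "'k::field_char_0 poly" and h0 w :: 'k and r :: nat
  assumes "degree a > 0"
    and "h0 \<noteq> 0"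
    and "r \<ge> 1"
    and "prim_root r w"
  shows "kalg_iso (gwa_inv_alg a h0 w r) (gwa_scalar a h0)
           (gwa (\<Prod>i<r. pcompose ((gwa_sigma (- h0) ^^ i) a) [:0, of_nat r:]) h0)
           (gwa_scalar (\<Prod>i<r. pcompose ((gwa_sigma (- h0) ^^ i) a) [:0, of_nat r:]) h0)
         \<noteq> {}"
proof -
  have "a \<noteq> 0"
    using assms(1) by auto
  then have "gwa_inv_iso a h0 r \<in> kalg_iso (gwa_inv_alg a h0 w r) (gwa_scalar a h0)
               (gwa (atilde a h0 r) h0) (gwa_scalar (atilde a h0 r) h0)"
    unfolding kalg_iso_def
    using gwa_inv_iso_ring_iso[OF _ assms(3,4)] gwa_inv_iso_scalar[OF _ assms(3,4)] by blast
  then show ?thesis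
    unfolding atilde_def by blast
qed

end
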